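(* Let $\mathcal S=(s_\alpha)_{\alpha\in L(\omega_1)}$ be a ladder system on $\omega_1$, let $K=K_{\mathcal S}$ be the associated ladder system space, and let $\phi:K\to K$ be any map whose restriction to $S(\omega_1)$ is an injection into $L(\omega_1)$ and which maps every element of $L(\omega_1)\cup\{\infty\}$ to $\infty$ (such a $\phi$ is continuous). Let $T=C_\phi:C(K)\to C(K)$, $f\mapsto f\circ\phi$. Then $T$ satisfies neither of the following conditions: (b) there exists $g\in\mathfrak B(K)$ such that $T^*+M_g^*:C(K)^*\to C(K)^*$ has separable range; (c) there exists $g\in\mathfrak B(K)$ such that the restriction of $(T^*+M_g^* )^*:C(K)^{**}\to C(K)^{**}$ to $C(K)$ (canonically embedded in $C(K)^{**}$) has separable range. In particular, there exists a bounded operator on $C(K_{\mathcal S})$ satisfying neither (b) nor (c).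
   Context: $L(\omega_1)$ denotes the set of limit ordinals in $\omega_1$ (the first uncountable ordinal) and $S(\omega_1)=\omega_1\setminus L(\omega_1)$. A ladder system on $\omega_1$ is a family $\mathcal S=(s_\alpha)_{\alpha\in L(\omega_1)}$ where for each limit $\alpha$, $s_\alpha=\{s^n_\alpha:n\in\omega\}$ and $(s^n_\alpha)_{n\in\omega}$ is a strictly increasing sequence in $S(\omega_1)$ converging (in the order sense) to $\alpha$. The ladder system topology $\tau_{\mathcal S}$ on $\omega_1$ is the topology in which every element of $S(\omega_1)$ is isolated and the basic neighborhoods of a limit ordinal $\alpha$ are the sets $\{\alpha\}\cup B$ with $B$ a cofinite subset of $s_\alpha$. This is a locally compact Hausdorff space, and $K_{\mathcal S}=\omega_1\cup\{\infty\}$ is its one-point compactification. $C(K)$ is the Banach space of continuous real-valued functions on $K$ with the sup norm; $C(K)^*$ is identified with the space of finite regular signed Borel measures on $K$. $\mathfrak B(K)$ is the space of bounded real-valued Borel functions on $K$. For $g\in\mathfrak B(K)$, $M_g^*:C(K)^*\to C(K)^*$ sends a measure $\mu$ to $g\,\mathrm d\mu$. Stars denote Banach space adjoints. *)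

theory Defs
  imports "HOL-Analysis.Analysis"
begin

text \<open>omega_1 is modelled by a well-ordered type 'a that is uncountable and all of whose
proper initial segments are countable (this determines 'a up to order isomorphism).\<close>

definition is_omega1 :: "'a::wellorder itself \<Rightarrow> bool" where
  "is_omega1 _ \<longleftrightarrow> uncountable (UNIV :: 'a set) \<and> (\<forall>x::'a. countable {y. y < x})"

text \<open>Nonzero limit ordinals: L(omega_1). S(omega_1) is the complement (0 and successors).\<close>
definition lim_ord :: "'a::wellorder \<Rightarrow> bool" where
  "lim_ord x \<longleftrightarrow> (\<exists>y. y < x) \<and> (\<forall>y<x. \<exists>z. y < z \<and> z < x)"

definition ladder_system :: "('a::wellorder \<Rightarrow> nat \<Rightarrow> 'a) \<Rightarrow> bool" where
  "ladder_system s \<longleftrightarrow>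
     (\<forall>\<alpha>. lim_ord \<alpha> \<longrightarrow>
        strict_mono (s \<alpha>) \<and> (\<forall>n. \<not> lim_ord (s \<alpha> n) \<and> s \<alpha> n < \<alpha>) \<and>
        (\<forall>\<beta><\<alpha>. \<exists>n. \<beta> < s \<alpha> n))"

definition ladder_top :: "('a::wellorder \<Rightarrow> nat \<Rightarrow> 'a) \<Rightarrow> 'a topology" where
  "ladder_top s = topology (\<lambda>U. \<forall>\<alpha>\<in>U. lim_ord \<alpha> \<longrightarrow> finite (range (s \<alpha>) - U))"

lemma istopology_ladder: "istopology (\<lambda>U. \<forall>\<alpha>\<in>U. lim_ord \<alpha> \<longrightarrow> finite (range (s \<alpha>) - U))"
  unfolding istopology_def
proof (intro conjI allI impI ballI)
  fix S T \<alpha>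
  assume "\<forall>\<alpha>\<in>S. lim_ord \<alpha> \<longrightarrow> finite (range (s \<alpha>) - S)"
     "\<forall>\<alpha>\<in>T. lim_ord \<alpha> \<longrightarrow> finite (range (s \<alpha>) - T)" "\<alpha> \<in> S \<inter> T" "lim_ord \<alpha>"
  then show "finite (range (s \<alpha>) - S \<inter> T)"
    by (metis Diff_Int IntD1 IntD2 finite_UnI)
next
  fix K :: "'a set set" and \<alpha>
  assume "\<forall>S\<in>K. \<forall>\<alpha>\<in>S. lim_ord \<alpha> \<longrightarrow> finite (range (s \<alpha>) - S)" "\<alpha> \<in> \<Union>K" "lim_ord \<alpha>"
  then obtain S where "S \<in> K" "\<alpha> \<in> S" "finite (range (s \<alpha>) - S)" by blast
  moreover have "range (s \<alpha>) - \<Union>K \<subseteq> range (s \<alpha>) - S" using \<open>S \<in> K\<close> by blast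
  ultimately show "finite (range (s \<alpha>) - \<Union>K)" by (meson finite_subset)
qed

lemma openin_ladder_top:
  "openin (ladder_top s) U \<longleftrightarrow> (\<forall>\<alpha>\<in>U. lim_ord \<alpha> \<longrightarrow> finite (range (s \<alpha>) - U))"
  unfolding ladder_top_def by (simp add: topology_inverse'[OF istopology_ladder])

lemma topspace_ladder_top [simp]: "topspace (ladder_top s) = UNIV"
proof -
  have "openin (ladder_top s) UNIV" by (simp add: openin_ladder_top)
  then show ?thesis by (meson openin_subset top.extremum_unique)
qed

text \<open>One-point (Alexandroff) compactification K_S = omega_1 \<union> {\<infinity>}, realised on 'a option
with None playing the role of \<infinity>.\<close>
definition Kopen :: "('a::wellorder \<Rightarrow> nat \<Rightarrow> 'a) \<Rightarrow> 'a option set \<Rightarrow> bool" where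
  "Kopen s V \<longleftrightarrow> openin (ladder_top s) (Some -` V) \<and>
     (None \<in> V \<longrightarrow> compactin (ladder_top s) (- (Some -` V)) \<and> closedin (ladder_top s) (- (Some -` V)))"

definition K_top :: "('a::wellorder \<Rightarrow> nat \<Rightarrow> 'a) \<Rightarrow> 'a option topology" where
  "K_top s = topology (Kopen s)"

lemma istopology_Kopen: "istopology (Kopen s)"
  unfolding istopology_def
proof (intro conjI allI impI)
  fix S T assume S: "Kopen s S" and T: "Kopen s T"
  have e: "- (Some -` (S \<inter> T)) = - (Some -` S) \<union> - (Some -` T)" by auto
  show "Kopen s (S \<inter> T)" using S T unfolding Kopen_def
    by (auto simp: e vimage_Int intro: compactin_Un closedin_Un)
next
  fix KK :: "'a option set set" assume A: "\<forall>K\<in>KK. Kopen s K"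
  have o: "openin (ladder_top s) (Some -` \<Union>KK)"
    using A unfolding Kopen_def vimage_Union by (auto intro: openin_Union)
  have c: "closedin (ladder_top s) (- (Some -` \<Union>KK))"
    using o by (simp add: closedin_def Compl_eq_Diff_UNIV double_diff)
  show "Kopen s (\<Union>KK)"
    unfolding Kopen_def
  proof (intro conjI impI o c)
    assume "None \<in> \<Union>KK"
    then obtain S where "S \<in> KK" "None \<in> S" by blast
    then have "compactin (ladder_top s) (- (Some -` S))" using A Kopen_def by blast
    moreover have "- (Some -` \<Union>KK) \<subseteq> - (Some -` S)" using \<open>S \<in> KK\<close> by blast
    ultimately show "compactin (ladder_top s) (- (Some -` \<Union>KK))" using c closed_compactin by blast
  qed
qed

lemma openin_K_top: "openin (K_top s) V \<longleftrightarrow> Kopen s V"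
  unfolding K_top_def by (simp add: topology_inverse'[OF istopology_Kopen])

definition CK :: "'b topology \<Rightarrow> ('b \<Rightarrow> real) set" where
  "CK X = {f. continuous_map X euclideanreal f}"

definition sup_norm :: "'b topology \<Rightarrow> ('b \<Rightarrow> real) \<Rightarrow> real" where
  "sup_norm X f = Sup ((\<lambda>x. \<bar>f x\<bar>) ` topspace X)"

definition borel_sets :: "'b topology \<Rightarrow> 'b set set" where
  "borel_sets X = sigma_sets (topspace X) {U. openin X U}"

definition signed_measure :: "'b topology \<Rightarrow> ('b set \<Rightarrow> real) \<Rightarrow> bool" where
  "signed_measure X \<mu> \<longleftrightarrow> (\<forall>A. A \<notin> borel_sets X \<longrightarrow> \<mu> A = 0) \<and> \<mu> {} = 0 \<and>
     (\<forall>A::nat \<Rightarrow> 'b set. range A \<subseteq> borel_sets X \<longrightarrow> disjoint_family A \<longrightarrow>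
        (\<lambda>n. \<mu> (A n)) sums \<mu> (\<Union>n. A n))"

definition variation :: "'b topology \<Rightarrow> ('b set \<Rightarrow> real) \<Rightarrow> 'b set \<Rightarrow> real" where
  "variation X \<mu> A = Sup {(\<Sum>B\<in>P. \<bar>\<mu> B\<bar>) | P. finite P \<and> P \<subseteq> borel_sets X \<and> disjoint P \<and> \<Union>P = A}"

definition tv_norm :: "'b topology \<Rightarrow> ('b set \<Rightarrow> real) \<Rightarrow> real" where
  "tv_norm X \<mu> = variation X \<mu> (topspace X)"

definition regular_sm :: "'b topology \<Rightarrow> ('b set \<Rightarrow> real) \<Rightarrow> bool" where
  "regular_sm X \<mu> \<longleftrightarrow> (\<forall>A\<in>borel_sets X. \<forall>e>0. \<exists>C U. compactin X C \<and> openin X U \<and>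
      C \<subseteq> A \<and> A \<subseteq> U \<and> variation X \<mu> (U - C) < e)"

text \<open>C(K)^*: the finite regular signed Borel measures.\<close>
definition Mreg :: "'b topology \<Rightarrow> ('b set \<Rightarrow> real) set" where
  "Mreg X = {\<mu>. signed_measure X \<mu> \<and> regular_sm X \<mu>}"

text \<open>Integration against a signed measure via its Jordan decomposition.\<close>
definition jordan_pos :: "'b topology \<Rightarrow> ('b set \<Rightarrow> real) \<Rightarrow> 'b measure" where
  "jordan_pos X \<mu> = measure_of (topspace X) (borel_sets X)
      (\<lambda>A. ennreal ((variation X \<mu> A + \<mu> A) / 2))"

definition jordan_neg :: "'b topology \<Rightarrow> ('b set \<Rightarrow> real) \<Rightarrow> 'b measure" where
  "jordan_neg X \<mu> = measure_of (topspace X) (borel_sets X)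
      (\<lambda>A. ennreal ((variation X \<mu> A - \<mu> A) / 2))"

definition sint :: "'b topology \<Rightarrow> ('b set \<Rightarrow> real) \<Rightarrow> ('b \<Rightarrow> real) \<Rightarrow> real" where
  "sint X \<mu> f = (\<integral>x. f x \<partial>jordan_pos X \<mu>) - (\<integral>x. f x \<partial>jordan_neg X \<mu>)"

definition bborel :: "'b topology \<Rightarrow> ('b \<Rightarrow> real) \<Rightarrow> bool" where
  "bborel X g \<longleftrightarrow> (\<forall>U. open U \<longrightarrow> {x \<in> topspace X. g x \<in> U} \<in> borel_sets X) \<and>
     (\<exists>B. \<forall>x\<in>topspace X. \<bar>g x\<bar> \<le> B)"

definition bounded_op :: "'b topology \<Rightarrow> (('b \<Rightarrow> real) \<Rightarrow> ('b \<Rightarrow> real)) \<Rightarrow> bool" where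
  "bounded_op X T \<longleftrightarrow> (\<forall>f\<in>CK X. T f \<in> CK X) \<and>
     (\<forall>f\<in>CK X. \<forall>h\<in>CK X. \<forall>a b. \<forall>x\<in>topspace X.
        T (\<lambda>y. a * f y + b * h y) x = a * T f x + b * T h x) \<and>
     (\<exists>B. \<forall>f\<in>CK X. sup_norm X (T f) \<le> B * sup_norm X f)"

text \<open>Banach adjoint T^* : C(K)^* \<rightarrow> C(K)^* under the Riesz identification.\<close>
definition adj :: "'b topology \<Rightarrow> (('b \<Rightarrow> real) \<Rightarrow> ('b \<Rightarrow> real)) \<Rightarrow> ('b set \<Rightarrow> real) \<Rightarrow> ('b set \<Rightarrow> real)" where
  "adj X T \<mu> = (THE \<nu>. \<nu> \<in> Mreg X \<and> (\<forall>f\<in>CK X. sint X \<nu> f = sint X \<mu> (T f)))"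

definition mult_dual :: "'b topology \<Rightarrow> ('b \<Rightarrow> real) \<Rightarrow> ('b set \<Rightarrow> real) \<Rightarrow> ('b set \<Rightarrow> real)" where
  "mult_dual X g \<mu> = (\<lambda>A. if A \<in> borel_sets X then sint X \<mu> (\<lambda>x. indicator A x * g x) else 0)"

definition Aop :: "'b topology \<Rightarrow> (('b \<Rightarrow> real) \<Rightarrow> ('b \<Rightarrow> real)) \<Rightarrow> ('b \<Rightarrow> real) \<Rightarrow> ('b set \<Rightarrow> real) \<Rightarrow> ('b set \<Rightarrow> real)" where
  "Aop X T g \<mu> = (\<lambda>A. adj X T \<mu> A + mult_dual X g \<mu> A)"

definition cond_b :: "'b topology \<Rightarrow> (('b \<Rightarrow> real) \<Rightarrow> ('b \<Rightarrow> real)) \<Rightarrow> ('b \<Rightarrow> real) \<Rightarrow> bool" where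
  "cond_b X T g \<longleftrightarrow> (let R = Aop X T g ` Mreg X in
     \<exists>D. countable D \<and> D \<subseteq> R \<and> (\<forall>x\<in>R. \<forall>e>0. \<exists>d\<in>D. tv_norm X (\<lambda>A. x A - d A) < e))"

text \<open>(T^* + M_g^*)^* applied to f \<in> C(K) \<subseteq> C(K)^{**}: the functional mu \<mapsto> <f, (T^*+M_g^*) mu>
on C(K)^*; and the norm distance of C(K)^{**}.\<close>
definition bidual_elt :: "'b topology \<Rightarrow> (('b \<Rightarrow> real) \<Rightarrow> ('b \<Rightarrow> real)) \<Rightarrow> ('b \<Rightarrow> real) \<Rightarrow> ('b \<Rightarrow> real) \<Rightarrow> (('b set \<Rightarrow> real) \<Rightarrow> real)" where
  "bidual_elt X T g f = (\<lambda>\<mu>. if \<mu> \<in> Mreg X then sint X (Aop X T g \<mu>) f else 0)"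

definition bidual_dist :: "'b topology \<Rightarrow> (('b set \<Rightarrow> real) \<Rightarrow> real) \<Rightarrow> (('b set \<Rightarrow> real) \<Rightarrow> real) \<Rightarrow> real" where
  "bidual_dist X \<Phi> \<Psi> = Sup {\<bar>\<Phi> \<mu> - \<Psi> \<mu>\<bar> | \<mu>. \<mu> \<in> Mreg X \<and> tv_norm X \<mu> \<le> 1}"

definition cond_c :: "'b topology \<Rightarrow> (('b \<Rightarrow> real) \<Rightarrow> ('b \<Rightarrow> real)) \<Rightarrow> ('b \<Rightarrow> real) \<Rightarrow> bool" where
  "cond_c X T g \<longleftrightarrow> (let R = bidual_elt X T g ` CK X in
     \<exists>D. countable D \<and> D \<subseteq> R \<and> (\<forall>x\<in>R. \<forall>e>0. \<exists>d\<in>D. bidual_dist X x d < e))"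

definition ladder_map :: "('a::wellorder option \<Rightarrow> 'a option) \<Rightarrow> bool" where
  "ladder_map \<phi> \<longleftrightarrow> inj_on \<phi> (Some ` {x. \<not> lim_ord x}) \<and>
     (\<forall>x. \<not> lim_ord x \<longrightarrow> \<phi> (Some x) \<in> Some ` {\<alpha>. lim_ord \<alpha>}) \<and>
     (\<forall>\<alpha>. lim_ord \<alpha> \<longrightarrow> \<phi> (Some \<alpha>) = None) \<and> \<phi> None = None"

end

theory Submission
  imports Defs "HOL-Probability.Giry_Monad"
begin

text \<open>For an isolated point \<open>a\<close> of \<open>K\<close>, \<open>(T\<^sup>* + M\<^sub>g\<^sup>*) \<delta>\<^sub>a = \<delta>\<^sub>\<phi>\<^sub>a + g(a) \<delta>\<^sub>a\<close> with \<open>\<phi> a \<noteq> a\<close>.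
  If the range were separable, uncountably many of these measures would lie within \<open>1/2\<close> of one
  element \<open>\<nu>\<close> of the range, so \<open>|\<nu>({\<phi> a})| > 1/2\<close> at uncountably many distinct points \<open>\<phi> a\<close>; but a
  bounded additive set function has only finitely many such atoms. For (c), clopen indicators
  attached to the ladders form an uncountable family in \<open>C(K)\<close> in which each member is, after
  applying \<open>(T\<^sup>* + M\<^sub>g\<^sup>*)\<^sup>*\<close> and evaluating at a suitable Dirac measure, at distance \<open>1\<close> from all
  but countably many others.

  Computing \<open>T\<^sup>*\<close> as the push-forward along \<open>\<phi>\<close> needs the uniqueness half of the Riesz
  representation theorem: a regular signed measure is determined by its integrals of continuous
  functions, which follows from the Jordan decomposition and Urysohn's lemma.\<close>

section \<open>Borel sets of a topology\<close>

lemma sigma_algebra_borel_sets: "sigma_algebra (topspace X) (borel_sets X)"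
  unfolding borel_sets_def by (rule sigma_algebra_sigma_sets) (auto dest: openin_subset)

lemma borel_sets_openin: "openin X U \<Longrightarrow> U \<in> borel_sets X"
  unfolding borel_sets_def by (auto intro: sigma_sets.Basic)

lemma borel_sets_closedin: "closedin X C \<Longrightarrow> C \<in> borel_sets X"
proof -
  assume C: "closedin X C"
  then have "C = topspace X - (topspace X - C)" using closedin_subset by blast
  then show ?thesis using C unfolding borel_sets_def
    by (metis closedin_def mem_Collect_eq sigma_sets.Basic sigma_sets.Compl)
qed

context
  fixes X :: "'b topology"
begin

interpretation borel: sigma_algebra "topspace X" "borel_sets X"
  by (rule sigma_algebra_borel_sets)

lemma borel_sets_subset: "A \<in> borel_sets X \<Longrightarrow> A \<subseteq> topspace X"
  using borel.sets_into_space by blast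

lemma borel_sets_Pow: "borel_sets X \<subseteq> Pow (topspace X)"
  using borel.space_closed .

lemma borel_sets_empty: "{} \<in> borel_sets X"
  by blast

lemma borel_sets_topspace: "topspace X \<in> borel_sets X"
  by blast

lemma borel_sets_Un: "A \<in> borel_sets X \<Longrightarrow> B \<in> borel_sets X \<Longrightarrow> A \<union> B \<in> borel_sets X"
  by blast

lemma borel_sets_Int: "A \<in> borel_sets X \<Longrightarrow> B \<in> borel_sets X \<Longrightarrow> A \<inter> B \<in> borel_sets X"
  by blast

lemma borel_sets_Diff: "A \<in> borel_sets X \<Longrightarrow> B \<in> borel_sets X \<Longrightarrow> A - B \<in> borel_sets X"
  by blast

lemma borel_sets_UN: "range F \<subseteq> borel_sets X \<Longrightarrow> (\<Union>i::nat. F i) \<in> borel_sets X"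
  by blast

lemma borel_sets_finite_Union: "finite P \<Longrightarrow> P \<subseteq> borel_sets X \<Longrightarrow> \<Union>P \<in> borel_sets X"
  by blast

lemma sigma_sets_borel_sets: "sigma_sets (topspace X) (borel_sets X) = borel_sets X"
  by (rule borel.sigma_sets_eq)

end

lemma borel_sets_openin_Diff_compactin:
  "Hausdorff_space X \<Longrightarrow> openin X U \<Longrightarrow> compactin X C \<Longrightarrow> U - C \<in> borel_sets X"
  by (simp add: borel_sets_Diff borel_sets_openin borel_sets_closedin compactin_imp_closedin)

lemma borel_sets_singleton:
  "Hausdorff_space X \<Longrightarrow> p \<in> topspace X \<Longrightarrow> {p} \<in> borel_sets X"
  by (simp add: borel_sets_closedin compactin_imp_closedin)

definition borel_measure :: "'b topology \<Rightarrow> 'b measure" where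
  "borel_measure X = measure_of (topspace X) (borel_sets X) (\<lambda>_. 0)"

lemma sets_borel_measure [simp]: "sets (borel_measure X) = borel_sets X"
  unfolding borel_measure_def by (simp add: sets_measure_of[OF borel_sets_Pow] sigma_sets_borel_sets)

lemma space_borel_measure [simp]: "space (borel_measure X) = topspace X"
  unfolding borel_measure_def by (simp add: space_measure_of[OF borel_sets_Pow])

lemma space_eq_topspace: "sets M = borel_sets X \<Longrightarrow> space M = topspace X"
  using sets_eq_imp_space_eq[of M "borel_measure X"] by simp

lemma borel_measurable_borel_sets_cong:
  assumes "sets M = borel_sets X" "f \<in> borel_measurable (borel_measure X)"
  shows "f \<in> borel_measurable M"
proof -
  have "borel_measurable M = borel_measurable (borel_measure X)"
    by (rule measurable_cong_sets) (simp_all add: assms(1))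
  then show ?thesis using assms(2) by metis
qed

lemma continuous_map_borel_measurable:
  assumes "continuous_map X euclideanreal f"
  shows "f \<in> borel_measurable (borel_measure X)"
proof (rule borel_measurableI)
  fix S :: "real set" assume "open S"
  then have "openin X {x \<in> topspace X. f x \<in> S}"
    using openin_continuous_map_preimage[OF assms] by simp
  moreover have "f -` S \<inter> space (borel_measure X) = {x \<in> topspace X. f x \<in> S}" by auto
  ultimately show "f -` S \<inter> space (borel_measure X) \<in> sets (borel_measure X)"
    by (simp add: borel_sets_openin)
qed

lemma continuous_map_measurable:
  assumes c: "continuous_map X X \<phi>"
  shows "\<phi> \<in> measurable (borel_measure X) (borel_measure X)"
proof -
  have op: "{U. openin X U} \<subseteq> Pow (topspace X)" using openin_subset by blast
  have "\<phi> \<in> measurable (borel_measure X) (measure_of (topspace X) {U. openin X U} (\<lambda>_. 0))"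
  proof (rule measurable_measure_of[OF op])
    show "\<phi> \<in> space (borel_measure X) \<rightarrow> topspace X" using c by (auto simp: continuous_map_def)
    fix U assume "U \<in> {U. openin X U}"
    then have "openin X {x \<in> topspace X. \<phi> x \<in> U}" using c by (simp add: continuous_map_def)
    moreover have "\<phi> -` U \<inter> space (borel_measure X) = {x \<in> topspace X. \<phi> x \<in> U}" by auto
    ultimately show "\<phi> -` U \<inter> space (borel_measure X) \<in> sets (borel_measure X)"
      by (simp add: borel_sets_openin)
  qed
  moreover have "sets (measure_of (topspace X) {U. openin X U} (\<lambda>_. 0)) = sets (borel_measure X)"
    by (simp add: sets_measure_of[OF op] borel_sets_def)
  ultimately show ?thesis using measurable_cong_sets[of "borel_measure X" "borel_measure X"] by metis
qed

lemma borel_sets_preimage: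
  assumes "continuous_map X X \<phi>" "A \<in> borel_sets X"
  shows "{x \<in> topspace X. \<phi> x \<in> A} \<in> borel_sets X"
proof -
  have "\<phi> -` A \<inter> space (borel_measure X) \<in> sets (borel_measure X)"
    using measurable_sets[OF continuous_map_measurable] assms by simp
  moreover have "\<phi> -` A \<inter> space (borel_measure X) = {x \<in> topspace X. \<phi> x \<in> A}" by auto
  ultimately show ?thesis by simp
qed

lemma bborel_borel_measurable: "bborel X g \<Longrightarrow> g \<in> borel_measurable (borel_measure X)"
  unfolding bborel_def
  by (rule borel_measurableI) (simp add: vimage_def Int_def conj_commute)

lemma bborel_bound: "bborel X g \<Longrightarrow> \<exists>B\<ge>0. \<forall>x\<in>topspace X. \<bar>g x\<bar> \<le> B"
  unfolding bborel_def by (meson abs_ge_zero dual_order.trans linorder_linear)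

lemma CK_bound:
  assumes "compact_space X" "f \<in> CK X"
  shows "\<exists>B\<ge>0. \<forall>x\<in>topspace X. \<bar>f x\<bar> \<le> B"
proof -
  have "compactin euclideanreal (f ` topspace X)"
    using image_compactin[of X "topspace X" euclideanreal f] assms
    by (simp add: CK_def compact_space_def)
  then have "bounded (f ` topspace X)" by (simp add: compact_imp_bounded)
  then obtain B where "\<forall>y\<in>f ` topspace X. norm y \<le> B" by (auto simp: bounded_iff)
  then show ?thesis by (intro exI[of _ "max B 0"]) auto
qed

lemma integrable_bounded_borel:
  fixes u :: "'b \<Rightarrow> real"
  assumes "finite_measure M" "sets M = borel_sets X" "u \<in> borel_measurable (borel_measure X)"
    "\<And>x. x \<in> topspace X \<Longrightarrow> \<bar>u x\<bar> \<le> B"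
  shows "integrable M u"
proof -
  interpret finite_measure M by fact
  have "AE x in M. norm (u x) \<le> B"
    using assms(4) space_eq_topspace[OF assms(2)] by (intro AE_I2) auto
  then show ?thesis
    by (rule integrable_const_bound) (rule borel_measurable_borel_sets_cong[OF assms(2,3)])
qed

lemma integral_abs_le_measure:
  fixes f :: "'b \<Rightarrow> real"
  assumes "finite_measure M" "\<And>x. x \<in> space M \<Longrightarrow> \<bar>f x\<bar> \<le> B" "0 \<le> B"
  shows "\<bar>integral\<^sup>L M f\<bar> \<le> B * measure M (space M)"
proof (cases "integrable M f")
  case True
  interpret finite_measure M by fact
  have "\<bar>integral\<^sup>L M f\<bar> \<le> (\<integral>x. \<bar>f x\<bar> \<partial>M)" by (rule integral_abs_bound)
  also have "\<dots> \<le> (\<integral>x. B \<partial>M)"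
    by (rule integral_mono) (use True assms in auto)
  finally show ?thesis by (simp add: mult.commute)
next
  case False
  then show ?thesis using assms(3) by (simp add: not_integrable_integral_eq)
qed

section \<open>Finitely additive set functions and signed measures\<close>

definition finitely_additive :: "'b topology \<Rightarrow> ('b set \<Rightarrow> real) \<Rightarrow> bool" where
  "finitely_additive X \<nu> \<longleftrightarrow> \<nu> {} = 0 \<and>
     (\<forall>A\<in>borel_sets X. \<forall>B\<in>borel_sets X. A \<inter> B = {} \<longrightarrow> \<nu> (A \<union> B) = \<nu> A + \<nu> B)"

definition bounded_additive :: "'b topology \<Rightarrow> ('b set \<Rightarrow> real) \<Rightarrow> real \<Rightarrow> bool" where
  "bounded_additive X \<nu> K \<longleftrightarrow> finitely_additive X \<nu> \<and> (\<forall>A\<in>borel_sets X. \<bar>\<nu> A\<bar> \<le> K)"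

lemma finitely_additive_Un:
  "finitely_additive X \<nu> \<Longrightarrow> A \<in> borel_sets X \<Longrightarrow> B \<in> borel_sets X \<Longrightarrow> A \<inter> B = {} \<Longrightarrow>
    \<nu> (A \<union> B) = \<nu> A + \<nu> B"
  unfolding finitely_additive_def by blast

lemma finitely_additive_Int_Diff:
  assumes fa: "finitely_additive X \<nu>" and A: "A \<in> borel_sets X" and B: "B \<in> borel_sets X"
  shows "\<nu> A = \<nu> (A \<inter> B) + \<nu> (A - B)"
  using finitely_additive_Un[OF fa borel_sets_Int[OF A B] borel_sets_Diff[OF A B]]
  by (simp add: Int_Diff_Un Int_Diff_disjoint)

lemma finitely_additive_Diff:
  assumes "finitely_additive X \<nu>" "A \<in> borel_sets X" "B \<in> borel_sets X" "B \<subseteq> A"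
  shows "\<nu> (A - B) = \<nu> A - \<nu> B"
  using finitely_additive_Int_Diff[OF assms(1-3)] assms(4) by (simp add: Int_absorb1)

lemma finitely_additive_finite_Union:
  assumes fa: "finitely_additive X \<nu>"
  shows "finite Q \<Longrightarrow> Q \<subseteq> borel_sets X \<Longrightarrow> disjoint Q \<Longrightarrow> \<nu> (\<Union>Q) = (\<Sum>B\<in>Q. \<nu> B)"
proof (induction Q rule: finite_induct)
  case empty then show ?case using fa by (simp add: finitely_additive_def)
next
  case (insert B Q)
  have "B \<inter> \<Union>Q = {}" "disjoint Q"
    using insert(2,5) unfolding disjoint_def by (auto intro: insertCI)
  moreover have "\<Union>Q \<in> borel_sets X" using insert(1,4) by (intro borel_sets_finite_Union) auto
  ultimately show ?case
    using insert finitely_additive_Un[OF fa, of B "\<Union>Q"] by simp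
qed

text \<open>Splitting a finite disjoint family into the sets of nonnegative and of negative mass.\<close>

lemma finitely_additive_sum_abs:
  assumes fa: "finitely_additive X \<nu>" and P: "finite P" "P \<subseteq> borel_sets X" "disjoint P"
  obtains Q where "Q \<subseteq> P" "(\<Sum>B\<in>P. \<bar>\<nu> B\<bar>) = \<nu> (\<Union>Q) - \<nu> (\<Union>(P - Q))"
    "\<nu> (\<Union>P) = \<nu> (\<Union>Q) + \<nu> (\<Union>(P - Q))"
proof
  let ?Q = "{B\<in>P. 0 \<le> \<nu> B}"
  have split: "sum h P = sum h (P - ?Q) + sum h ?Q" for h :: "_ \<Rightarrow> real"
    by (rule sum.subset_diff) (use P(1) in auto)
  have unions: "\<nu> (\<Union>?Q) = (\<Sum>B\<in>?Q. \<nu> B)" "\<nu> (\<Union>(P - ?Q)) = (\<Sum>B\<in>P - ?Q. \<nu> B)"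
    using P finitely_additive_finite_Union[OF fa, of ?Q] finitely_additive_finite_Union[OF fa, of "P - ?Q"]
      pairwise_subset[OF P(3)] by (simp_all add: subset_iff)
  have "(\<Sum>B\<in>?Q. \<bar>\<nu> B\<bar>) = (\<Sum>B\<in>?Q. \<nu> B)"
    by (rule sum.cong) auto
  moreover have "(\<Sum>B\<in>P - ?Q. \<bar>\<nu> B\<bar>) = - (\<Sum>B\<in>P - ?Q. \<nu> B)"
    unfolding sum_negf[symmetric] by (rule sum.cong) auto
  ultimately show "(\<Sum>B\<in>P. \<bar>\<nu> B\<bar>) = \<nu> (\<Union>?Q) - \<nu> (\<Union>(P - ?Q))"
    using split[of "\<lambda>B. \<bar>\<nu> B\<bar>"] unions by simp
  show "\<nu> (\<Union>P) = \<nu> (\<Union>?Q) + \<nu> (\<Union>(P - ?Q))"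
    using split[of \<nu>] unions finitely_additive_finite_Union[OF fa P] by simp
qed auto

lemma bounded_additive_sum_abs_le:
  assumes ba: "bounded_additive X \<nu> K" and P: "finite P" "P \<subseteq> borel_sets X" "disjoint P"
  shows "(\<Sum>B\<in>P. \<bar>\<nu> B\<bar>) \<le> 2 * K"
proof -
  have fa: "finitely_additive X \<nu>" and K: "\<And>A. A \<in> borel_sets X \<Longrightarrow> \<bar>\<nu> A\<bar> \<le> K"
    using ba by (auto simp: bounded_additive_def)
  obtain Q where "Q \<subseteq> P" "(\<Sum>B\<in>P. \<bar>\<nu> B\<bar>) = \<nu> (\<Union>Q) - \<nu> (\<Union>(P - Q))"
    by (rule finitely_additive_sum_abs[OF fa P])
  moreover have "\<bar>\<nu> (\<Union>Q)\<bar> \<le> K" "\<bar>\<nu> (\<Union>(P - Q))\<bar> \<le> K"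
    using P \<open>Q \<subseteq> P\<close> by (intro K borel_sets_finite_Union; auto dest: finite_subset)+
  ultimately show ?thesis by linarith
qed

lemma bounded_additive_add:
  assumes "bounded_additive X \<mu> K1" "bounded_additive X \<nu> K2"
  shows "bounded_additive X (\<lambda>A. \<mu> A + c * \<nu> A) (K1 + \<bar>c\<bar> * K2)"
  unfolding bounded_additive_def finitely_additive_def
proof (intro conjI ballI impI)
  have fa: "finitely_additive X \<mu>" "finitely_additive X \<nu>"
    and K: "\<And>A. A \<in> borel_sets X \<Longrightarrow> \<bar>\<mu> A\<bar> \<le> K1 \<and> \<bar>\<nu> A\<bar> \<le> K2"
    using assms by (auto simp: bounded_additive_def)
  then show "\<mu> {} + c * \<nu> {} = 0" by (simp add: finitely_additive_def)
  fix A B assume "A \<in> borel_sets X" "B \<in> borel_sets X" "A \<inter> B = {}"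
  then show "\<mu> (A \<union> B) + c * \<nu> (A \<union> B) = \<mu> A + c * \<nu> A + (\<mu> B + c * \<nu> B)"
    using finitely_additive_Un[OF fa(1)] finitely_additive_Un[OF fa(2)] by (simp add: algebra_simps)
next
  fix A assume "A \<in> borel_sets X"
  then have "\<bar>\<mu> A\<bar> \<le> K1" "\<bar>c\<bar> * \<bar>\<nu> A\<bar> \<le> \<bar>c\<bar> * K2"
    using assms by (auto simp: bounded_additive_def intro: mult_left_mono)
  moreover have "\<bar>c * \<nu> A\<bar> = \<bar>c\<bar> * \<bar>\<nu> A\<bar>" by (rule abs_mult)
  ultimately show "\<bar>\<mu> A + c * \<nu> A\<bar> \<le> K1 + \<bar>c\<bar> * K2"
    using abs_triangle_ineq[of "\<mu> A" "c * \<nu> A"] by linarith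
qed

lemma bounded_additive_mono: "bounded_additive X \<nu> K \<Longrightarrow> K \<le> K' \<Longrightarrow> bounded_additive X \<nu> K'"
  unfolding bounded_additive_def by (meson order_trans)

lemma bounded_additive_uminus: "bounded_additive X \<nu> K \<Longrightarrow> bounded_additive X (\<lambda>A. - \<nu> A) K"
  unfolding bounded_additive_def finitely_additive_def by auto

lemma bounded_additive_nonneg: "bounded_additive X \<nu> K \<Longrightarrow> 0 \<le> K"
  unfolding bounded_additive_def using borel_sets_empty by (meson abs_ge_zero order_trans)

lemma signed_measure_empty: "signed_measure X \<nu> \<Longrightarrow> \<nu> {} = 0"
  by (simp add: signed_measure_def)

lemma signed_measure_finitely_additive:
  assumes sm: "signed_measure X \<nu>"
  shows "finitely_additive X \<nu>"
  unfolding finitely_additive_def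
proof (intro conjI ballI impI signed_measure_empty[OF sm])
  fix A B assume A: "A \<in> borel_sets X" and B: "B \<in> borel_sets X" and d: "A \<inter> B = {}"
  define F where "F n = (if n = 0 then A else if n = 1 then B else {})" for n :: nat
  have "range F \<subseteq> borel_sets X" "disjoint_family F"
    using A B d borel_sets_empty by (auto simp: F_def disjoint_family_on_def)
  then have "(\<lambda>n. \<nu> (F n)) sums \<nu> (\<Union>n. F n)"
    using sm unfolding signed_measure_def by blast
  moreover have "(\<lambda>n. \<nu> (F n)) sums (\<Sum>n\<in>{0,1}. \<nu> (F n))"
    by (rule sums_finite) (auto simp: F_def signed_measure_empty[OF sm])
  moreover have "(\<Union>n. F n) = A \<union> B" by (auto simp: F_def split: if_splits)
  ultimately show "\<nu> (A \<union> B) = \<nu> A + \<nu> B" using sums_unique2 by (fastforce simp: F_def)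
qed

lemmas signed_measure_Un = finitely_additive_Un[OF signed_measure_finitely_additive]
lemmas signed_measure_Diff = finitely_additive_Diff[OF signed_measure_finitely_additive]
lemmas signed_measure_Int_Diff = finitely_additive_Int_Diff[OF signed_measure_finitely_additive]

lemma signed_measure_uminus: "signed_measure X \<nu> \<Longrightarrow> signed_measure X (\<lambda>A. - \<nu> A)"
  unfolding signed_measure_def by (simp add: sums_minus)

lemma signed_measure_add:
  "signed_measure X \<mu> \<Longrightarrow> signed_measure X \<nu> \<Longrightarrow> signed_measure X (\<lambda>A. \<mu> A + c * \<nu> A)"
  unfolding signed_measure_def by (auto intro!: sums_add sums_mult)

definition unbounded_within :: "'b topology \<Rightarrow> ('b set \<Rightarrow> real) \<Rightarrow> 'b set \<Rightarrow> bool" where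
  "unbounded_within X \<nu> A \<longleftrightarrow> A \<in> borel_sets X \<and> (\<forall>M. \<exists>B\<in>borel_sets X. B \<subseteq> A \<and> M < \<bar>\<nu> B\<bar>)"

lemma unbounded_within_split:
  assumes sm: "signed_measure X \<nu>" and bad: "unbounded_within X \<nu> A"
  obtains B where "B \<in> borel_sets X" "B \<subseteq> A" "1 \<le> \<bar>\<nu> B\<bar>" "unbounded_within X \<nu> (A - B)"
proof -
  have A: "A \<in> borel_sets X" using bad unfolding unbounded_within_def by blast
  obtain B0 where B0: "B0 \<in> borel_sets X" "B0 \<subseteq> A" "\<bar>\<nu> A\<bar> + 1 < \<bar>\<nu> B0\<bar>"
    using bad unfolding unbounded_within_def by blast
  have C1: "A - B0 \<in> borel_sets X" "1 < \<bar>\<nu> (A - B0)\<bar>"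
    using borel_sets_Diff[OF A B0(1)] signed_measure_Diff[OF sm A B0(1,2)] B0(3) by auto
  have "unbounded_within X \<nu> B0 \<or> unbounded_within X \<nu> (A - B0)"
  proof (rule ccontr)
    assume "\<not> ?thesis"
    then have "\<exists>M1. \<forall>B\<in>borel_sets X. B \<subseteq> B0 \<longrightarrow> \<bar>\<nu> B\<bar> \<le> M1"
      "\<exists>M2. \<forall>B\<in>borel_sets X. B \<subseteq> A - B0 \<longrightarrow> \<bar>\<nu> B\<bar> \<le> M2"
      using B0(1) C1(1) by (auto simp: unbounded_within_def not_less)
    then obtain M1 M2 where M1: "\<forall>B\<in>borel_sets X. B \<subseteq> B0 \<longrightarrow> \<bar>\<nu> B\<bar> \<le> M1"
      and M2: "\<forall>B\<in>borel_sets X. B \<subseteq> A - B0 \<longrightarrow> \<bar>\<nu> B\<bar> \<le> M2"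
      by blast
    obtain B where B: "B \<in> borel_sets X" "B \<subseteq> A" "M1 + M2 < \<bar>\<nu> B\<bar>"
      using bad unfolding unbounded_within_def by blast
    have "\<bar>\<nu> (B \<inter> B0)\<bar> \<le> M1" "\<bar>\<nu> (B - B0)\<bar> \<le> M2"
      using M1[rule_format, OF borel_sets_Int[OF B(1) B0(1)]] M2[rule_format, OF borel_sets_Diff[OF B(1) B0(1)]]
        B(2) by auto
    then show False
      using signed_measure_Int_Diff[OF sm B(1) B0(1)] B(3) by linarith
  qed
  then show thesis
  proof
    assume "unbounded_within X \<nu> B0"
    moreover have "A - (A - B0) = B0" using B0(2) by blast
    ultimately show thesis using C1 by (intro that[of "A - B0"]) auto
  next
    assume "unbounded_within X \<nu> (A - B0)"
    moreover have "1 \<le> \<bar>\<nu> B0\<bar>" using B0(3) by linarith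
    ultimately show thesis using B0(1,2) by (intro that[of B0])
  qed
qed

text \<open>Otherwise one could split off infinitely many disjoint sets of mass at least \<open>1\<close>,
  contradicting the convergence of \<open>\<Sum>n. \<nu> (C n)\<close>.\<close>

lemma signed_measure_bounded:
  assumes sm: "signed_measure X \<nu>"
  shows "\<exists>M. \<forall>A\<in>borel_sets X. \<bar>\<nu> A\<bar> \<le> M"
proof (rule ccontr)
  assume "\<not> ?thesis"
  then have bad0: "unbounded_within X \<nu> (topspace X)"
    unfolding unbounded_within_def using borel_sets_subset borel_sets_topspace by (meson not_le)
  have "\<forall>A. \<exists>B. unbounded_within X \<nu> A \<longrightarrow>
      B \<in> borel_sets X \<and> B \<subseteq> A \<and> 1 \<le> \<bar>\<nu> B\<bar> \<and> unbounded_within X \<nu> (A - B)"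
    using unbounded_within_split[OF sm] by blast
  from choice[OF this] obtain cut where cut: "\<And>A. unbounded_within X \<nu> A \<Longrightarrow> cut A \<in> borel_sets X \<and>
      cut A \<subseteq> A \<and> 1 \<le> \<bar>\<nu> (cut A)\<bar> \<and> unbounded_within X \<nu> (A - cut A)"
    by blast
  define R where "R n = ((\<lambda>A. A - cut A) ^^ n) (topspace X)" for n
  have R_Suc: "R (Suc n) = R n - cut (R n)" for n by (simp add: R_def)
  have bad: "unbounded_within X \<nu> (R n)" for n
  proof (induction n)
    case 0 then show ?case using bad0 by (simp add: R_def)
  next
    case (Suc n) then show ?case using cut[OF Suc] by (simp add: R_Suc)
  qed
  have decr: "decseq R"
    by (rule decseq_SucI) (simp add: R_Suc)
  have "disjoint_family (\<lambda>n. cut (R n))"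
    unfolding disjoint_family_on_def
  proof (intro ballI impI)
    have "cut (R m) \<inter> cut (R n) = {}" if "m < n" for m n
    proof -
      have "cut (R n) \<subseteq> R (Suc m)"
        using cut[OF bad, of n] decseqD[OF decr, of "Suc m" n] that by (meson Suc_leI order_trans)
      then show ?thesis by (auto simp: R_Suc)
    qed
    then show "cut (R m) \<inter> cut (R n) = {}" if "m \<noteq> n" for m n
      using that by (metis inf_commute linorder_neqE_nat)
  qed
  moreover have "range (\<lambda>n. cut (R n)) \<subseteq> borel_sets X" using cut[OF bad] by blast
  ultimately have "(\<lambda>n. \<nu> (cut (R n))) sums \<nu> (\<Union>n. cut (R n))"
    using sm by (simp add: signed_measure_def)
  then have "(\<lambda>n. \<nu> (cut (R n))) \<longlonglongrightarrow> 0" by (blast intro: summable_LIMSEQ_zero sums_summable)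
  then obtain n where "\<bar>\<nu> (cut (R n))\<bar> < 1"
    using LIMSEQ_D[of "\<lambda>n. \<nu> (cut (R n))" 0 1] by auto
  then show False using cut[OF bad] by (meson not_le)
qed

section \<open>Variation and Jordan decomposition\<close>

definition pos_variation :: "'b topology \<Rightarrow> ('b set \<Rightarrow> real) \<Rightarrow> 'b set \<Rightarrow> real" where
  "pos_variation X \<nu> A = Sup {\<nu> B | B. B \<in> borel_sets X \<and> B \<subseteq> A}"

lemma bdd_above_pos_variation:
  assumes "signed_measure X \<nu>"
  shows "bdd_above {\<nu> B | B. B \<in> borel_sets X \<and> B \<subseteq> A}"
proof -
  obtain M where "\<forall>A\<in>borel_sets X. \<bar>\<nu> A\<bar> \<le> M" using signed_measure_bounded[OF assms] by blast
  then have "\<forall>x\<in>{\<nu> B | B. B \<in> borel_sets X \<and> B \<subseteq> A}. x \<le> M" by fastforce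
  then show ?thesis unfolding bdd_above_def by blast
qed

lemma pos_variation_upper:
  "signed_measure X \<nu> \<Longrightarrow> B \<in> borel_sets X \<Longrightarrow> B \<subseteq> A \<Longrightarrow> \<nu> B \<le> pos_variation X \<nu> A"
  unfolding pos_variation_def by (rule cSup_upper) (auto intro: bdd_above_pos_variation)

lemma pos_variation_least:
  "(\<And>B. B \<in> borel_sets X \<Longrightarrow> B \<subseteq> A \<Longrightarrow> \<nu> B \<le> z) \<Longrightarrow> pos_variation X \<nu> A \<le> z"
  unfolding pos_variation_def by (rule cSup_least) (use borel_sets_empty in auto)

lemma pos_variation_nonneg: "signed_measure X \<nu> \<Longrightarrow> 0 \<le> pos_variation X \<nu> A"
  using pos_variation_upper[of X \<nu> "{}" A] borel_sets_empty signed_measure_empty by fastforce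

lemma pos_variation_mono:
  "signed_measure X \<nu> \<Longrightarrow> A \<subseteq> A' \<Longrightarrow> pos_variation X \<nu> A \<le> pos_variation X \<nu> A'"
  by (rule pos_variation_least) (meson pos_variation_upper order_trans)

lemma pos_variation_empty: "signed_measure X \<nu> \<Longrightarrow> pos_variation X \<nu> {} = 0"
  using pos_variation_nonneg[of X \<nu> "{}"] pos_variation_least[of X "{}" \<nu> 0] signed_measure_empty
  by fastforce

lemma pos_variation_approx:
  assumes sm: "signed_measure X \<nu>" and e: "0 < e"
  obtains B where "B \<in> borel_sets X" "B \<subseteq> A" "pos_variation X \<nu> A - e < \<nu> B"
proof -
  have "pos_variation X \<nu> A - e < Sup {\<nu> B | B. B \<in> borel_sets X \<and> B \<subseteq> A}"
    using e by (simp add: pos_variation_def)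
  then show thesis
    using that by (subst (asm) less_cSup_iff) (use bdd_above_pos_variation[OF sm] borel_sets_empty in auto)
qed

lemma pos_variation_Un:
  assumes sm: "signed_measure X \<nu>" and A: "A \<in> borel_sets X" "A' \<in> borel_sets X"
    and d: "A \<inter> A' = {}"
  shows "pos_variation X \<nu> (A \<union> A') = pos_variation X \<nu> A + pos_variation X \<nu> A'"
proof (rule antisym)
  show "pos_variation X \<nu> (A \<union> A') \<le> pos_variation X \<nu> A + pos_variation X \<nu> A'"
  proof (rule pos_variation_least)
    fix B assume B: "B \<in> borel_sets X" "B \<subseteq> A \<union> A'"
    have "\<nu> (B \<inter> A) \<le> pos_variation X \<nu> A"
      by (rule pos_variation_upper[OF sm borel_sets_Int[OF B(1) A(1)]]) auto
    moreover have "\<nu> (B - A) \<le> pos_variation X \<nu> A'"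
      by (rule pos_variation_upper[OF sm borel_sets_Diff[OF B(1) A(1)]]) (use B(2) in blast)
    ultimately show "\<nu> B \<le> pos_variation X \<nu> A + pos_variation X \<nu> A'"
      using signed_measure_Int_Diff[OF sm B(1) A(1)] by linarith
  qed
next
  show "pos_variation X \<nu> A + pos_variation X \<nu> A' \<le> pos_variation X \<nu> (A \<union> A')"
  proof (rule field_le_epsilon)
    fix e :: real assume e: "0 < e"
    obtain B where B: "B \<in> borel_sets X" "B \<subseteq> A" "pos_variation X \<nu> A - e/2 < \<nu> B"
      by (rule pos_variation_approx[OF sm half_gt_zero[OF e]])
    obtain B' where B': "B' \<in> borel_sets X" "B' \<subseteq> A'" "pos_variation X \<nu> A' - e/2 < \<nu> B'"
      by (rule pos_variation_approx[OF sm half_gt_zero[OF e]])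
    have "\<nu> (B \<union> B') = \<nu> B + \<nu> B'" using B B' d by (intro signed_measure_Un[OF sm]) auto
    moreover have "\<nu> (B \<union> B') \<le> pos_variation X \<nu> (A \<union> A')"
      using B B' by (intro pos_variation_upper[OF sm] borel_sets_Un) auto
    ultimately show "pos_variation X \<nu> A + pos_variation X \<nu> A' \<le> pos_variation X \<nu> (A \<union> A') + e"
      using B B' by linarith
  qed
qed

lemma pos_variation_sums:
  assumes sm: "signed_measure X \<nu>" and r: "range A \<subseteq> borel_sets X" and d: "disjoint_family A"
  shows "(\<lambda>n. pos_variation X \<nu> (A n)) sums pos_variation X \<nu> (\<Union>n. A n)"
proof -
  have partial: "pos_variation X \<nu> (\<Union>i<n. A i) = (\<Sum>i<n. pos_variation X \<nu> (A i))" for n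
  proof (induction n)
    case 0 then show ?case by (simp add: pos_variation_empty[OF sm])
  next
    case (Suc n)
    have "(\<Union>i<n. A i) \<in> borel_sets X" using r by (intro borel_sets_finite_Union) auto
    moreover have "(\<Union>i<n. A i) \<inter> A n = {}"
      using d unfolding disjoint_family_on_def by (auto dest: less_imp_neq)
    moreover have "(\<Union>i<Suc n. A i) = (\<Union>i<n. A i) \<union> A n" by (auto simp: lessThan_Suc)
    ultimately show ?case
      using Suc r by (simp add: pos_variation_Un[OF sm] range_subsetD)
  qed
  have le: "(\<Sum>i<n. pos_variation X \<nu> (A i)) \<le> pos_variation X \<nu> (\<Union>n. A n)" for n
    unfolding partial[symmetric] by (rule pos_variation_mono[OF sm]) auto
  have summ: "summable (\<lambda>n. pos_variation X \<nu> (A n))"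
    by (rule summableI_nonneg_bounded[OF pos_variation_nonneg[OF sm] le])
  have "pos_variation X \<nu> (\<Union>n. A n) \<le> (\<Sum>n. pos_variation X \<nu> (A n))"
  proof (rule pos_variation_least)
    fix B assume B: "B \<in> borel_sets X" "B \<subseteq> (\<Union>n. A n)"
    have r2: "range (\<lambda>n. B \<inter> A n) \<subseteq> borel_sets X" using B r borel_sets_Int by blast
    have "disjoint_family (\<lambda>n. B \<inter> A n)" using d by (auto simp: disjoint_family_on_def)
    then have "(\<lambda>n. \<nu> (B \<inter> A n)) sums \<nu> (\<Union>n. B \<inter> A n)"
      using sm r2 unfolding signed_measure_def by blast
    moreover have "(\<Union>n. B \<inter> A n) = B" using B by auto
    ultimately have s: "(\<lambda>n. \<nu> (B \<inter> A n)) sums \<nu> B" by simp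
    show "\<nu> B \<le> (\<Sum>n. pos_variation X \<nu> (A n))"
      by (rule sums_le[OF _ s summable_sums[OF summ]]) (use pos_variation_upper[OF sm] r2 in blast)
  qed
  then have "(\<Sum>n. pos_variation X \<nu> (A n)) = pos_variation X \<nu> (\<Union>n. A n)"
    using suminf_le_const[OF summ le] by linarith
  then show ?thesis using summable_sums[OF summ] by simp
qed

lemma pos_variation_uminus:
  assumes sm: "signed_measure X \<nu>" and A: "A \<in> borel_sets X"
  shows "pos_variation X (\<lambda>B. - \<nu> B) A = pos_variation X \<nu> A - \<nu> A"
proof (rule antisym)
  show "pos_variation X (\<lambda>B. - \<nu> B) A \<le> pos_variation X \<nu> A - \<nu> A"
  proof (rule pos_variation_least)
    fix B assume B: "B \<in> borel_sets X" "B \<subseteq> A"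
    have "\<nu> (A - B) \<le> pos_variation X \<nu> A"
      by (rule pos_variation_upper[OF sm borel_sets_Diff[OF A B(1)]]) blast
    then show "- \<nu> B \<le> pos_variation X \<nu> A - \<nu> A"
      using signed_measure_Diff[OF sm A B] by linarith
  qed
next
  have "pos_variation X \<nu> A \<le> pos_variation X (\<lambda>B. - \<nu> B) A + \<nu> A"
  proof (rule pos_variation_least)
    fix B assume B: "B \<in> borel_sets X" "B \<subseteq> A"
    have "- \<nu> (A - B) \<le> pos_variation X (\<lambda>B. - \<nu> B) A"
      using pos_variation_upper[OF signed_measure_uminus[OF sm] borel_sets_Diff[OF A B(1)]] by blast
    then show "\<nu> B \<le> pos_variation X (\<lambda>B. - \<nu> B) A + \<nu> A"
      using signed_measure_Diff[OF sm A B] by linarith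
  qed
  then show "pos_variation X \<nu> A - \<nu> A \<le> pos_variation X (\<lambda>B. - \<nu> B) A" by linarith
qed

lemma sum_abs_le_pos_variation:
  assumes sm: "signed_measure X \<nu>" and P: "finite P" "P \<subseteq> borel_sets X" "disjoint P" "\<Union>P = A"
  shows "(\<Sum>B\<in>P. \<bar>\<nu> B\<bar>) \<le> 2 * pos_variation X \<nu> A - \<nu> A"
proof -
  obtain Q where Q: "Q \<subseteq> P" "(\<Sum>B\<in>P. \<bar>\<nu> B\<bar>) = \<nu> (\<Union>Q) - \<nu> (\<Union>(P - Q))"
    "\<nu> (\<Union>P) = \<nu> (\<Union>Q) + \<nu> (\<Union>(P - Q))"
    by (rule finitely_additive_sum_abs[OF signed_measure_finitely_additive[OF sm] P(1-3)])
  have "finite Q" by (rule finite_subset[OF Q(1) P(1)])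
  then have "\<Union>Q \<in> borel_sets X" using P(2) Q(1) by (intro borel_sets_finite_Union) auto
  then have "\<nu> (\<Union>Q) \<le> pos_variation X \<nu> A"
    using P(4) Q(1) by (intro pos_variation_upper[OF sm]) auto
  moreover have "\<nu> A = \<nu> (\<Union>Q) + \<nu> (\<Union>(P - Q))" using Q(3) P(4) by simp
  ultimately show ?thesis using Q(2) by linarith
qed

lemma variation_eq_pos_variation:
  assumes sm: "signed_measure X \<nu>" and A: "A \<in> borel_sets X"
  shows "variation X \<nu> A = 2 * pos_variation X \<nu> A - \<nu> A"
  unfolding variation_def
proof (rule cSup_eq_non_empty)
  let ?S = "{\<Sum>B\<in>P. \<bar>\<nu> B\<bar> |P. finite P \<and> P \<subseteq> borel_sets X \<and> disjoint P \<and> \<Union>P = A}"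
  show "?S \<noteq> {}"
    using A by (auto intro!: exI[of _ "{A}"] simp: disjoint_def)
  show "x \<le> 2 * pos_variation X \<nu> A - \<nu> A" if x: "x \<in> ?S" for x
    using x sum_abs_le_pos_variation[OF sm] by blast
  fix y assume ub: "\<And>x. x \<in> ?S \<Longrightarrow> x \<le> y"
  show "2 * pos_variation X \<nu> A - \<nu> A \<le> y"
  proof (rule field_le_epsilon)
    fix e :: real assume e: "0 < e"
    obtain B where B: "B \<in> borel_sets X" "B \<subseteq> A" "pos_variation X \<nu> A - e/2 < \<nu> B"
      by (rule pos_variation_approx[OF sm half_gt_zero[OF e]])
    have AB: "A - B \<in> borel_sets X" using borel_sets_Diff[OF A B(1)] .
    have "(\<Sum>C\<in>{B, A - B}. \<bar>\<nu> C\<bar>) \<in> ?S"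
      using B AB by (auto intro!: exI[of _ "{B, A - B}"] simp: disjoint_def)
    moreover have "2 * \<nu> B - \<nu> A \<le> (\<Sum>C\<in>{B, A - B}. \<bar>\<nu> C\<bar>)"
    proof (cases "B = A - B")
      case True
      then have "B = {}" "A = {}" by auto
      then show ?thesis by (simp add: signed_measure_empty[OF sm])
    next
      case False
      then show ?thesis using signed_measure_Diff[OF sm A B(1,2)] by simp
    qed
    ultimately show "2 * pos_variation X \<nu> A - \<nu> A \<le> y + e" using ub B(3) by fastforce
  qed
qed

lemma variation_eq:
  assumes "signed_measure X \<nu>" "A \<in> borel_sets X"
  shows "variation X \<nu> A = pos_variation X \<nu> A + pos_variation X (\<lambda>B. - \<nu> B) A"
  using variation_eq_pos_variation[OF assms] pos_variation_uminus[OF assms] by simp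

lemma variation_mono:
  assumes sm: "signed_measure X \<nu>" and A: "A \<in> borel_sets X" "A' \<in> borel_sets X" "A \<subseteq> A'"
  shows "variation X \<nu> A \<le> variation X \<nu> A'"
  using variation_eq[OF sm A(1)] variation_eq[OF sm A(2)] pos_variation_mono[OF sm A(3)]
    pos_variation_mono[OF signed_measure_uminus[OF sm] A(3)]
  by simp

lemma abs_le_variation:
  assumes "signed_measure X \<nu>" "A \<in> borel_sets X"
  shows "\<bar>\<nu> A\<bar> \<le> variation X \<nu> A"
  using variation_eq[OF assms] pos_variation_upper[OF assms order_refl]
    pos_variation_upper[OF signed_measure_uminus[OF assms(1)] assms(2) order_refl]
    pos_variation_nonneg[OF assms(1), of A] pos_variation_nonneg[OF signed_measure_uminus[OF assms(1)], of A]
  unfolding abs_le_iff by linarith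

lemma tv_norm_nonneg: "signed_measure X \<nu> \<Longrightarrow> 0 \<le> tv_norm X \<nu>"
  unfolding tv_norm_def using abs_le_variation[OF _ borel_sets_topspace] by (meson abs_ge_zero order_trans)

lemma variation_Un_le:
  assumes sm: "signed_measure X \<nu>" and A: "A \<in> borel_sets X" "A' \<in> borel_sets X"
  shows "variation X \<nu> (A \<union> A') \<le> variation X \<nu> A + variation X \<nu> A'"
proof -
  have b: "A' - A \<in> borel_sets X" using borel_sets_Diff[OF A(2,1)] .
  have "variation X \<nu> (A \<union> (A' - A)) = variation X \<nu> A + variation X \<nu> (A' - A)"
    using variation_eq[OF sm] pos_variation_Un[OF sm A(1) b] A(1) b
      pos_variation_Un[OF signed_measure_uminus[OF sm] A(1) b] borel_sets_Un[OF A(1) b]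
    by simp
  moreover have "variation X \<nu> (A' - A) \<le> variation X \<nu> A'"
    using variation_mono[OF sm b A(2)] by auto
  ultimately show ?thesis by (simp add: Un_Diff_cancel)
qed

lemma bounded_additive_abs_le_tv_norm:
  assumes ba: "bounded_additive X \<nu> K" and A: "A \<in> borel_sets X"
  shows "\<bar>\<nu> A\<bar> \<le> tv_norm X \<nu>"
proof -
  let ?S = "{\<Sum>B\<in>P. \<bar>\<nu> B\<bar> |P. finite P \<and> P \<subseteq> borel_sets X \<and> disjoint P \<and> \<Union>P = topspace X}"
  have b: "topspace X - A \<in> borel_sets X" using borel_sets_Diff[OF borel_sets_topspace A] .
  have "(\<Sum>B\<in>{A, topspace X - A}. \<bar>\<nu> B\<bar>) \<in> ?S"
    using A b borel_sets_subset[OF A] by (intro CollectI exI[of _ "{A, topspace X - A}"]) (auto simp: disjoint_def)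
  moreover have "bdd_above ?S"
    using bounded_additive_sum_abs_le[OF ba] unfolding bdd_above_def by blast
  moreover have "\<bar>\<nu> A\<bar> \<le> (\<Sum>B\<in>{A, topspace X - A}. \<bar>\<nu> B\<bar>)"
    by (cases "A = topspace X - A") auto
  ultimately show ?thesis unfolding tv_norm_def variation_def by (meson cSup_upper order_trans)
qed

lemma variation_le_bounded_additive:
  assumes ba: "bounded_additive X \<nu> K" and A: "A \<in> borel_sets X"
  shows "variation X \<nu> A \<le> 2 * K"
  unfolding variation_def
  by (rule cSup_least) (use A bounded_additive_sum_abs_le[OF ba] in \<open>auto intro!: exI[of _ "{A}"] simp: disjoint_def\<close>)

lemma measure_space_pos_variation:
  assumes sm: "signed_measure X \<nu>"
  shows "measure_space (topspace X) (borel_sets X) (\<lambda>A. ennreal (pos_variation X \<nu> A))"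
  unfolding measure_space_def positive_def countably_additive_def
proof (intro conjI sigma_algebra_borel_sets allI impI)
  show "ennreal (pos_variation X \<nu> {}) = 0" by (simp add: pos_variation_empty[OF sm])
  fix A :: "nat \<Rightarrow> _" assume "range A \<subseteq> borel_sets X" "disjoint_family A"
  then have s: "(\<lambda>n. pos_variation X \<nu> (A n)) sums pos_variation X \<nu> (\<Union>n. A n)"
    by (rule pos_variation_sums[OF sm])
  show "(\<Sum>i. ennreal (pos_variation X \<nu> (A i))) = ennreal (pos_variation X \<nu> (\<Union>i. A i))"
    using suminf_ennreal2[OF pos_variation_nonneg[OF sm] sums_summable[OF s]] s sums_unique by metis
qed

lemma jordan_pos_eq:
  assumes sm: "signed_measure X \<nu>"
  shows "jordan_pos X \<nu> = measure_of (topspace X) (borel_sets X) (\<lambda>A. ennreal (pos_variation X \<nu> A))"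
  unfolding jordan_pos_def
  by (rule measure_of_eq[OF borel_sets_Pow]) (simp add: variation_eq_pos_variation[OF sm] sigma_sets_borel_sets)

lemma jordan_neg_eq: "jordan_neg X \<nu> = jordan_pos X (\<lambda>A. - \<nu> A)"
  unfolding jordan_neg_def jordan_pos_def variation_def by simp

lemma sets_jordan_pos [simp]: "sets (jordan_pos X \<nu>) = borel_sets X"
  unfolding jordan_pos_def by (simp add: sets_measure_of[OF borel_sets_Pow] sigma_sets_borel_sets)

lemma space_jordan_pos [simp]: "space (jordan_pos X \<nu>) = topspace X"
  unfolding jordan_pos_def by (simp add: space_measure_of[OF borel_sets_Pow])

lemma finite_measure_jordan_pos: "finite_measure (jordan_pos X \<nu>)"
  by (rule finite_measureI) (simp add: jordan_pos_def emeasure_measure_of_conv)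

lemma sets_jordan_neg [simp]: "sets (jordan_neg X \<nu>) = borel_sets X"
  by (simp add: jordan_neg_eq)

lemma space_jordan_neg [simp]: "space (jordan_neg X \<nu>) = topspace X"
  by (simp add: jordan_neg_eq)

lemma finite_measure_jordan_neg: "finite_measure (jordan_neg X \<nu>)"
  by (simp add: jordan_neg_eq finite_measure_jordan_pos)

lemma measure_jordan_pos:
  assumes sm: "signed_measure X \<nu>" and A: "A \<in> borel_sets X"
  shows "measure (jordan_pos X \<nu>) A = pos_variation X \<nu> A"
proof -
  have "emeasure (jordan_pos X \<nu>) A = ennreal (pos_variation X \<nu> A)"
    using measure_space_pos_variation[OF sm] A unfolding jordan_pos_eq[OF sm] measure_space_def
    by (intro emeasure_measure_of_sigma) auto
  then show ?thesis unfolding measure_def using pos_variation_nonneg[OF sm] by simp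
qed

lemma measure_jordan_neg:
  "signed_measure X \<nu> \<Longrightarrow> A \<in> borel_sets X \<Longrightarrow> measure (jordan_neg X \<nu>) A = pos_variation X (\<lambda>B. - \<nu> B) A"
  unfolding jordan_neg_eq by (rule measure_jordan_pos[OF signed_measure_uminus])

lemma measure_jordan_diff:
  "signed_measure X \<nu> \<Longrightarrow> A \<in> borel_sets X \<Longrightarrow>
    measure (jordan_pos X \<nu>) A - measure (jordan_neg X \<nu>) A = \<nu> A"
  by (simp add: measure_jordan_pos measure_jordan_neg pos_variation_uminus)

lemma measure_jordan_add:
  "signed_measure X \<nu> \<Longrightarrow> A \<in> borel_sets X \<Longrightarrow>
    measure (jordan_pos X \<nu>) A + measure (jordan_neg X \<nu>) A = variation X \<nu> A"
  by (simp add: measure_jordan_pos measure_jordan_neg variation_eq)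

text \<open>If \<open>\<nu>\<close> is not a signed measure, \<open>jordan_pos X \<nu>\<close> may be the null measure (the junk value
  of \<open>measure_of\<close>), but the bound holds in either case.\<close>

lemma measure_jordan_pos_le:
  assumes ba: "bounded_additive X \<nu> K"
  shows "measure (jordan_pos X \<nu>) (topspace X) \<le> 3 * K / 2"
proof -
  have "variation X \<nu> (topspace X) \<le> 2 * K"
    by (rule variation_le_bounded_additive[OF ba borel_sets_topspace])
  moreover have "\<bar>\<nu> (topspace X)\<bar> \<le> K"
    using ba borel_sets_topspace[of X] unfolding bounded_additive_def by blast
  moreover have "emeasure (jordan_pos X \<nu>) (topspace X) =
      (if measure_space (topspace X) (borel_sets X) (\<lambda>A. ennreal ((variation X \<nu> A + \<nu> A) / 2))
       then ennreal ((variation X \<nu> (topspace X) + \<nu> (topspace X)) / 2) else 0)"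
    unfolding jordan_pos_def emeasure_measure_of_conv sigma_sets_borel_sets by (simp add: borel_sets_topspace)
  ultimately show ?thesis
    using bounded_additive_nonneg[OF ba] unfolding measure_def
    by (cases "0 \<le> (variation X \<nu> (topspace X) + \<nu> (topspace X)) / 2") (auto simp: abs_le_iff ennreal_neg)
qed

lemma measure_jordan_neg_le:
  "bounded_additive X \<nu> K \<Longrightarrow> measure (jordan_neg X \<nu>) (topspace X) \<le> 3 * K / 2"
  unfolding jordan_neg_eq by (rule measure_jordan_pos_le[OF bounded_additive_uminus])

section \<open>Integration against signed measures\<close>

text \<open>Finite real linear combinations of finite Borel measures, given as lists of
  (coefficient, measure) pairs.\<close>

definition borel_measures :: "'b topology \<Rightarrow> (real \<times> 'b measure) list \<Rightarrow> bool" where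
  "borel_measures X Ms \<longleftrightarrow> (\<forall>(c, M)\<in>set Ms. finite_measure M \<and> sets M = borel_sets X)"

definition lincomb_measure :: "(real \<times> 'b measure) list \<Rightarrow> 'b set \<Rightarrow> real" where
  "lincomb_measure Ms A = (\<Sum>(c, M)\<leftarrow>Ms. c * measure M A)"

definition lincomb_integral :: "(real \<times> 'b measure) list \<Rightarrow> ('b \<Rightarrow> real) \<Rightarrow> real" where
  "lincomb_integral Ms f = (\<Sum>(c, M)\<leftarrow>Ms. c * integral\<^sup>L M f)"

lemma borel_measures_simps [simp]:
  "borel_measures X []"
  "borel_measures X ((c, M) # Ms) \<longleftrightarrow> finite_measure M \<and> sets M = borel_sets X \<and> borel_measures X Ms"
  by (auto simp: borel_measures_def)

lemma lincomb_measure_simps [simp]: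
  "lincomb_measure [] A = 0" "lincomb_measure ((c, M) # Ms) A = c * measure M A + lincomb_measure Ms A"
  by (simp_all add: lincomb_measure_def)

lemma lincomb_integral_simps [simp]:
  "lincomb_integral [] f = 0" "lincomb_integral ((c, M) # Ms) f = c * integral\<^sup>L M f + lincomb_integral Ms f"
  by (simp_all add: lincomb_integral_def)

lemma lincomb_integral_indicator:
  assumes "borel_measures X Ms" "A \<in> borel_sets X"
  shows "lincomb_integral Ms (indicator A) = lincomb_measure Ms A"
  using assms
  by (induction Ms) (auto simp: space_eq_topspace Int_absorb2 borel_sets_subset)

lemma lincomb_integral_cmult: "lincomb_integral Ms (\<lambda>x. a * u x) = a * lincomb_integral Ms u"
  by (induction Ms) (auto simp: algebra_simps)

lemma lincomb_integral_add:
  fixes u v :: "'b \<Rightarrow> real"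
  assumes Ms: "borel_measures X Ms"
    and u: "u \<in> borel_measurable (borel_measure X)" "\<And>x. x \<in> topspace X \<Longrightarrow> \<bar>u x\<bar> \<le> B"
    and v: "v \<in> borel_measurable (borel_measure X)" "\<And>x. x \<in> topspace X \<Longrightarrow> \<bar>v x\<bar> \<le> B"
  shows "lincomb_integral Ms (\<lambda>x. u x + v x) = lincomb_integral Ms u + lincomb_integral Ms v"
  using Ms
proof (induction Ms)
  case (Cons cM Ms)
  obtain c M where cM: "cM = (c, M)" by fastforce
  have "integrable M u" "integrable M v"
    using Cons.prems u v unfolding cM by (auto intro: integrable_bounded_borel)
  then show ?case using Cons by (simp add: cM algebra_simps)
qed simp

lemma lincomb_integral_monotone_limit:
  fixes U :: "nat \<Rightarrow> 'b \<Rightarrow> real"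
  assumes Ms: "borel_measures X Ms"
    and f: "f \<in> borel_measurable (borel_measure X)" "\<And>x. x \<in> topspace X \<Longrightarrow> f x \<le> B"
    and U: "\<And>i. U i \<in> borel_measurable (borel_measure X)" "\<And>i x. 0 \<le> U i x"
    "\<And>i x. x \<in> topspace X \<Longrightarrow> U i x \<le> f x"
    "\<And>x. x \<in> topspace X \<Longrightarrow> (\<lambda>i. U i x) \<longlonglongrightarrow> f x"
  shows "(\<lambda>i. lincomb_integral Ms (U i)) \<longlonglongrightarrow> lincomb_integral Ms f"
  using Ms
proof (induction Ms)
  case (Cons cM Ms)
  obtain c M where cM: "cM = (c, M)" by fastforce
  have M: "finite_measure M" "sets M = borel_sets X" and sp: "space M = topspace X"
    using Cons.prems by (auto simp: cM space_eq_topspace)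
  have "(\<lambda>i. integral\<^sup>L M (U i)) \<longlonglongrightarrow> integral\<^sup>L M f"
  proof (rule integral_dominated_convergence[where w=f])
    have "\<bar>f x\<bar> \<le> max B 0" if "x \<in> topspace X" for x
      using U(2)[of 0 x] U(3)[OF that, of 0] f(2)[OF that] by auto
    then show "integrable M f" by (rule integrable_bounded_borel[OF M f(1)])
    show "f \<in> borel_measurable M" by (rule borel_measurable_borel_sets_cong[OF M(2) f(1)])
    show "U i \<in> borel_measurable M" for i by (rule borel_measurable_borel_sets_cong[OF M(2) U(1)])
    show "AE x in M. (\<lambda>i. U i x) \<longlonglongrightarrow> f x" by (rule AE_I2) (simp add: sp U(4))
    show "AE x in M. norm (U i x) \<le> f x" for i by (rule AE_I2) (simp add: sp U(2,3))
  qed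
  moreover have "(\<lambda>i. lincomb_integral Ms (U i)) \<longlonglongrightarrow> lincomb_integral Ms f"
    using Cons by (simp add: cM)
  ultimately show ?case by (simp add: cM tendsto_add tendsto_mult_left)
qed simp

lemma incseq_fun_le:
  fixes U :: "nat \<Rightarrow> 'b \<Rightarrow> real"
  assumes "incseq U" "(\<lambda>i. U i x) \<longlonglongrightarrow> l"
  shows "U i x \<le> l"
proof -
  have "incseq (\<lambda>i. U i x)" using assms(1) unfolding incseq_def le_fun_def by blast
  then show ?thesis using assms(2) by (rule incseq_le)
qed

lemma lincomb_integral_eq_0_limit:
  fixes U :: "nat \<Rightarrow> 'b \<Rightarrow> real"
  assumes Ms: "borel_measures X Ms"
    and f: "f \<in> borel_measurable (borel_measure X)" "\<And>x. x \<in> topspace X \<Longrightarrow> f x \<le> B"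
    and U: "\<And>i. U i \<in> borel_measurable (borel_measure X)" "\<And>i x. 0 \<le> U i x" "incseq U"
    "\<And>x. x \<in> topspace X \<Longrightarrow> (\<lambda>i. U i x) \<longlonglongrightarrow> f x"
    and IH: "\<And>i C. \<forall>x\<in>topspace X. U i x \<le> C \<Longrightarrow> lincomb_integral Ms (U i) = 0"
  shows "lincomb_integral Ms f = 0"
proof -
  have le: "U i x \<le> f x" if "x \<in> topspace X" for i x
    using incseq_fun_le[OF U(3) U(4)[OF that]] .
  then have "lincomb_integral Ms (U i) = 0" for i
    using IH f(2) by (meson order_trans)
  moreover have "(\<lambda>i. lincomb_integral Ms (U i)) \<longlonglongrightarrow> lincomb_integral Ms f"
    by (rule lincomb_integral_monotone_limit[OF Ms f U(1,2) le U(4)])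
  ultimately show ?thesis by (simp add: LIMSEQ_const_iff)
qed

text \<open>For nonnegative functions this is the usual induction over simple functions and monotone
  limits; the bound has to be carried along, since only bounded functions are integrable.\<close>

lemma lincomb_integral_eq_0_nonneg:
  fixes f :: "'b \<Rightarrow> real"
  assumes Ms: "borel_measures X Ms" and eq: "\<And>A. A \<in> borel_sets X \<Longrightarrow> lincomb_measure Ms A = 0"
    and f: "f \<in> borel_measurable (borel_measure X)" "\<And>x. 0 \<le> f x"
    "\<And>x. x \<in> topspace X \<Longrightarrow> f x \<le> B"
  shows "lincomb_integral Ms f = 0"
proof -
  define P where "P u \<longleftrightarrow> (\<forall>C. (\<forall>x\<in>topspace X. u x \<le> C) \<longrightarrow> lincomb_integral Ms u = 0)" for u
  have "P f" using f(1,2)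
  proof (induction f rule: borel_measurable_induct_real)
    case (set A)
    then show ?case using eq lincomb_integral_indicator[OF Ms] by (simp add: P_def)
  next
    case (mult u a)
    show ?case unfolding P_def lincomb_integral_cmult
    proof (intro allI impI)
      fix C assume "\<forall>x\<in>topspace X. a * u x \<le> C"
      then have "a = 0 \<or> (\<forall>x\<in>topspace X. u x \<le> C / a)" using mult(1) by (auto simp: field_simps)
      then show "a * lincomb_integral Ms u = 0" using mult(4) unfolding P_def by auto
    qed
  next
    case (add u v)
    show ?case unfolding P_def
    proof (intro allI impI)
      fix C assume C: "\<forall>x\<in>topspace X. v x + u x \<le> C"
      have "\<bar>v x\<bar> \<le> C" "\<bar>u x\<bar> \<le> C" if "x \<in> topspace X" for x
        using C that \<open>\<And>x. 0 \<le> u x\<close>[of x] \<open>\<And>x. 0 \<le> v x\<close>[of x] by auto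
      then have "lincomb_integral Ms (\<lambda>x. v x + u x) = lincomb_integral Ms v + lincomb_integral Ms u"
        and "lincomb_integral Ms u = 0" "lincomb_integral Ms v = 0"
        using lincomb_integral_add[OF Ms \<open>v \<in> borel_measurable (borel_measure X)\<close> _
            \<open>u \<in> borel_measurable (borel_measure X)\<close>] \<open>P u\<close> \<open>P v\<close>
        unfolding P_def abs_le_iff by blast+
      then show "lincomb_integral Ms (\<lambda>x. v x + u x) = 0" by simp
    qed
  next
    case (seq U)
    show ?case unfolding P_def
    proof (intro allI impI)
      fix C assume C: "\<forall>x\<in>topspace X. f x \<le> C"
      have "\<And>x. x \<in> topspace X \<Longrightarrow> (\<lambda>i. U i x) \<longlonglongrightarrow> f x" using seq by simp
      moreover have "\<And>i C. \<forall>x\<in>topspace X. U i x \<le> C \<Longrightarrow> lincomb_integral Ms (U i) = 0"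
        using \<open>\<And>i. P (U i)\<close> unfolding P_def by blast
      ultimately show "lincomb_integral Ms f = 0"
        using C seq by (intro lincomb_integral_eq_0_limit[OF Ms f(1), of C U]) auto
    qed
  qed
  then show ?thesis using f(3) unfolding P_def by blast
qed

lemma lincomb_integral_eq_0:
  fixes f :: "'b \<Rightarrow> real"
  assumes Ms: "borel_measures X Ms" and eq: "\<And>A. A \<in> borel_sets X \<Longrightarrow> lincomb_measure Ms A = 0"
    and f: "f \<in> borel_measurable (borel_measure X)" "\<And>x. x \<in> topspace X \<Longrightarrow> \<bar>f x\<bar> \<le> B"
  shows "lincomb_integral Ms f = 0"
proof -
  have bnd: "max (f x) 0 \<le> B" "max (- f x) 0 \<le> B"
    "\<bar>max (f x) 0\<bar> \<le> B" "\<bar>(-1) * max (- f x) 0\<bar> \<le> B" if "x \<in> topspace X" for x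
    using f(2)[OF that] by auto
  have pos: "lincomb_integral Ms (\<lambda>x. max (f x) 0) = 0"
    using f bnd by (intro lincomb_integral_eq_0_nonneg[OF Ms eq, of _ B]) auto
  have neg: "lincomb_integral Ms (\<lambda>x. max (- f x) 0) = 0"
    using f bnd by (intro lincomb_integral_eq_0_nonneg[OF Ms eq, of _ B]) auto
  have "lincomb_integral Ms (\<lambda>x. max (f x) 0 + (-1) * max (- f x) 0) =
      lincomb_integral Ms (\<lambda>x. max (f x) 0) + lincomb_integral Ms (\<lambda>x. (-1) * max (- f x) 0)"
    by (rule lincomb_integral_add[OF Ms]) (use f(1) bnd in auto)
  moreover have "(\<lambda>x. max (f x) 0 + (-1) * max (- f x) 0) = f" by auto
  ultimately show ?thesis
    using pos neg lincomb_integral_cmult[of Ms "-1" "\<lambda>x. max (- f x) 0"] by simp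
qed

lemma sint_lincomb:
  fixes f :: "'b \<Rightarrow> real"
  assumes sm: "signed_measure X \<nu>" and Ms: "borel_measures X Ms"
    and eq: "\<And>A. A \<in> borel_sets X \<Longrightarrow> \<nu> A = lincomb_measure Ms A"
    and f: "f \<in> borel_measurable (borel_measure X)" "\<And>x. x \<in> topspace X \<Longrightarrow> \<bar>f x\<bar> \<le> B"
  shows "sint X \<nu> f = lincomb_integral Ms f"
proof -
  let ?Ns = "(1, jordan_pos X \<nu>) # (-1, jordan_neg X \<nu>) # map (\<lambda>(c, M). (- c, M)) Ms"
  have neg: "lincomb_measure (map (\<lambda>(c, M). (- c, M)) Ms) A = - lincomb_measure Ms A"
    "lincomb_integral (map (\<lambda>(c, M). (- c, M)) Ms) f = - lincomb_integral Ms f" for A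
    by (induction Ms) auto
  have "borel_measures X ?Ns"
    using Ms by (auto simp: borel_measures_def finite_measure_jordan_pos finite_measure_jordan_neg)
  moreover have "lincomb_measure ?Ns A = 0" if "A \<in> borel_sets X" for A
    using measure_jordan_diff[OF sm that] eq[OF that] by (simp only: lincomb_measure_simps neg)
  ultimately have "lincomb_integral ?Ns f = 0" by (rule lincomb_integral_eq_0[OF _ _ f])
  then show ?thesis by (simp only: lincomb_integral_simps neg) (simp add: sint_def)
qed

lemma sint_bound:
  fixes f :: "'b \<Rightarrow> real"
  assumes "\<And>x. x \<in> topspace X \<Longrightarrow> \<bar>f x\<bar> \<le> B" "0 \<le> B"
  shows "\<bar>sint X \<nu> f\<bar> \<le> B * (measure (jordan_pos X \<nu>) (topspace X) + measure (jordan_neg X \<nu>) (topspace X))"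
proof -
  have "\<bar>integral\<^sup>L (jordan_pos X \<nu>) f\<bar> \<le> B * measure (jordan_pos X \<nu>) (topspace X)"
    using integral_abs_le_measure[OF finite_measure_jordan_pos, of X \<nu> f B] assms by simp
  moreover have "\<bar>integral\<^sup>L (jordan_neg X \<nu>) f\<bar> \<le> B * measure (jordan_neg X \<nu>) (topspace X)"
    using integral_abs_le_measure[OF finite_measure_jordan_neg, of X \<nu> f B] assms by simp
  ultimately show ?thesis unfolding sint_def by (simp add: distrib_left)
qed

lemma sint_bound_bounded_additive:
  fixes f :: "'b \<Rightarrow> real"
  assumes ba: "bounded_additive X \<nu> K" and f: "\<And>x. x \<in> topspace X \<Longrightarrow> \<bar>f x\<bar> \<le> B" "0 \<le> B"
  shows "\<bar>sint X \<nu> f\<bar> \<le> B * (3 * K)"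
proof -
  have "\<bar>sint X \<nu> f\<bar> \<le> B * (measure (jordan_pos X \<nu>) (topspace X) + measure (jordan_neg X \<nu>) (topspace X))"
    by (rule sint_bound[OF f])
  also have "\<dots> \<le> B * (3 * K / 2 + 3 * K / 2)"
    using measure_jordan_pos_le[OF ba] measure_jordan_neg_le[OF ba] f(2) by (intro mult_left_mono) auto
  finally show ?thesis by simp
qed

definition dirac_sm :: "'b topology \<Rightarrow> 'b \<Rightarrow> 'b set \<Rightarrow> real" where
  "dirac_sm X a = (\<lambda>A. if A \<in> borel_sets X then indicator A a else 0)"

lemma signed_measure_dirac: "signed_measure X (dirac_sm X a)"
  unfolding signed_measure_def
proof (intro conjI allI impI)
  show "dirac_sm X a {} = 0" by (simp add: dirac_sm_def)
  show "A \<notin> borel_sets X \<Longrightarrow> dirac_sm X a A = 0" for A by (simp add: dirac_sm_def)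
  fix A :: "nat \<Rightarrow> _" assume r: "range A \<subseteq> borel_sets X" and d: "disjoint_family A"
  have "(\<Union>n. A n) \<in> borel_sets X" using r by (rule borel_sets_UN)
  then have eq: "dirac_sm X a (\<Union>n. A n) = indicator (\<Union>n. A n) a" by (simp add: dirac_sm_def)
  show "(\<lambda>n. dirac_sm X a (A n)) sums dirac_sm X a (\<Union>n. A n)"
  proof (cases "\<exists>k. a \<in> A k")
    case True
    then obtain k where k: "a \<in> A k" by blast
    have "dirac_sm X a (A n) = (if n = k then 1 else 0)" for n
      using d k range_subsetD[OF r] unfolding disjoint_family_on_def dirac_sm_def by (auto simp: indicator_def)
    then show ?thesis using k eq sums_single[of k "\<lambda>_. 1::real"] by (auto simp: indicator_def)
  next
    case False
    then have "dirac_sm X a (A n) = 0" for n by (simp add: dirac_sm_def)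
    then show ?thesis using False eq by simp
  qed
qed

lemma variation_dirac:
  assumes A: "A \<in> borel_sets X"
  shows "variation X (dirac_sm X a) A = indicator A a"
proof -
  have "pos_variation X (dirac_sm X a) A = indicator A a"
  proof (rule antisym)
    show "pos_variation X (dirac_sm X a) A \<le> indicator A a"
      by (rule pos_variation_least) (auto simp: dirac_sm_def indicator_def)
    show "indicator A a \<le> pos_variation X (dirac_sm X a) A"
      using pos_variation_upper[OF signed_measure_dirac A, of A a] A by (simp add: dirac_sm_def)
  qed
  then show ?thesis
    using variation_eq_pos_variation[OF signed_measure_dirac A] A by (simp add: dirac_sm_def)
qed

lemma tv_norm_dirac: "a \<in> topspace X \<Longrightarrow> tv_norm X (dirac_sm X a) = 1"
  unfolding tv_norm_def by (simp add: variation_dirac[OF borel_sets_topspace])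

lemma dirac_in_Mreg:
  assumes H: "Hausdorff_space X" and a: "a \<in> topspace X"
  shows "dirac_sm X a \<in> Mreg X"
  unfolding Mreg_def regular_sm_def
proof (intro CollectI conjI signed_measure_dirac ballI allI impI)
  fix A and e :: real assume A: "A \<in> borel_sets X" and e: "0 < e"
  have ca: "compactin X {a}" using a by simp
  have oa: "openin X (topspace X - {a})" using compactin_imp_closedin[OF H ca] by blast
  have "variation X (dirac_sm X a) (topspace X - {a}) = 0"
    using variation_dirac[OF borel_sets_openin[OF oa]] by simp
  then show "\<exists>C U. compactin X C \<and> openin X U \<and> C \<subseteq> A \<and> A \<subseteq> U \<and> variation X (dirac_sm X a) (U - C) < e"
  proof (cases "a \<in> A")
    case True
    then show ?thesis using ca e borel_sets_subset[OF A] \<open>variation X (dirac_sm X a) (topspace X - {a}) = 0\<close>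
      by (intro exI[of _ "{a}"] exI[of _ "topspace X"]) auto
  next
    case False
    then show ?thesis using oa e borel_sets_subset[OF A] \<open>variation X (dirac_sm X a) (topspace X - {a}) = 0\<close>
      by (intro exI[of _ "{}"] exI[of _ "topspace X - {a}"]) auto
  qed
qed

lemma sint_dirac_add:
  fixes f :: "'b \<Rightarrow> real"
  assumes a: "a \<in> topspace X" and b: "b \<in> topspace X"
    and f: "f \<in> borel_measurable (borel_measure X)" "\<And>x. x \<in> topspace X \<Longrightarrow> \<bar>f x\<bar> \<le> B"
  shows "sint X (\<lambda>A. dirac_sm X a A + c * dirac_sm X b A) f = f a + c * f b"
proof -
  let ?R = "\<lambda>x. return (borel_measure X) x"
  have R: "finite_measure (?R x)" if "x \<in> topspace X" for x
    using prob_space_return[of x "borel_measure X"] that by (simp add: prob_space_def)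
  have "sint X (\<lambda>A. dirac_sm X a A + c * dirac_sm X b A) f = lincomb_integral [(1, ?R a), (c, ?R b)] f"
  proof (rule sint_lincomb[OF signed_measure_add[OF signed_measure_dirac signed_measure_dirac] _ _ f])
    show "borel_measures X [(1, ?R a), (c, ?R b)]" using R a b by simp
    show "dirac_sm X a A + c * dirac_sm X b A = lincomb_measure [(1, ?R a), (c, ?R b)] A"
      if "A \<in> borel_sets X" for A
      using that by (simp add: measure_return dirac_sm_def)
  qed
  then show ?thesis using f(1) a b by (simp add: integral_return)
qed

lemma sint_dirac:
  fixes f :: "'b \<Rightarrow> real"
  assumes "a \<in> topspace X"
    and "f \<in> borel_measurable (borel_measure X)" "\<And>x. x \<in> topspace X \<Longrightarrow> \<bar>f x\<bar> \<le> B"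
  shows "sint X (dirac_sm X a) f = f a"
  using sint_dirac_add[OF assms(1,1,2,3), of 0] by simp

section \<open>Regular signed measures are determined by their integrals of continuous functions\<close>

lemma abs_integral_le_measure:
  fixes g :: "'b \<Rightarrow> real"
  assumes M: "finite_measure M" "sets M = borel_sets X" and D: "D \<in> borel_sets X"
    and g: "g \<in> borel_measurable (borel_measure X)"
    and le: "\<And>x. x \<in> topspace X \<Longrightarrow> \<bar>g x\<bar> \<le> indicator D x"
  shows "\<bar>integral\<^sup>L M g\<bar> \<le> measure M D"
proof -
  have sp: "space M = topspace X" by (rule space_eq_topspace[OF M(2)])
  have "\<bar>g x\<bar> \<le> 1" if "x \<in> topspace X" for x
    using le[OF that] by (cases "x \<in> D") auto
  then have ig: "integrable M g" by (rule integrable_bounded_borel[OF M g])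
  have iD: "integrable M (indicator D :: 'b \<Rightarrow> real)"
    using D by (intro integrable_bounded_borel[OF M, of _ 1] borel_measurable_indicator) auto
  have "\<bar>integral\<^sup>L M g\<bar> \<le> (\<integral>x. \<bar>g x\<bar> \<partial>M)" by (rule integral_abs_bound)
  also have "\<dots> \<le> integral\<^sup>L M (indicator D)"
    by (rule integral_mono) (use ig iD le sp in auto)
  also have "\<dots> = measure M D" using borel_sets_subset[OF D] sp by (simp add: Int_absorb2)
  finally show ?thesis .
qed

lemma sint_urysohn_approx:
  fixes f :: "'b \<Rightarrow> real"
  assumes sm: "signed_measure X \<nu>" and H: "Hausdorff_space X"
    and A: "A \<in> borel_sets X" and C: "compactin X C" "C \<subseteq> A" and U: "openin X U" "A \<subseteq> U"
    and fc: "continuous_map X euclideanreal f"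
    and f01: "\<And>x. x \<in> topspace X \<Longrightarrow> 0 \<le> f x \<and> f x \<le> 1"
    and f1: "\<And>x. x \<in> C \<Longrightarrow> f x = 1" and f0: "\<And>x. x \<in> topspace X - U \<Longrightarrow> f x = 0"
  shows "\<bar>sint X \<nu> f - \<nu> A\<bar> \<le> variation X \<nu> (U - C)"
proof -
  let ?P = "jordan_pos X \<nu>" and ?N = "jordan_neg X \<nu>"
  define g where "g x = f x - indicator A x" for x
  have D: "U - C \<in> borel_sets X" by (rule borel_sets_openin_Diff_compactin[OF H U(1) C(1)])
  have fm: "f \<in> borel_measurable (borel_measure X)" by (rule continuous_map_borel_measurable[OF fc])
  have Am: "(indicator A :: 'b \<Rightarrow> real) \<in> borel_measurable (borel_measure X)"
    using A by (intro borel_measurable_indicator) simp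
  have gm: "g \<in> borel_measurable (borel_measure X)" unfolding g_def using fm Am by simp
  have gle: "\<bar>g x\<bar> \<le> indicator (U - C) x" if x: "x \<in> topspace X" for x
    using f01[OF x] f1 f0[of x] x C(2) U(2) by (auto simp: g_def indicator_def)
  have integral_g: "integral\<^sup>L M g = integral\<^sup>L M f - measure M A"
    if "finite_measure M" "sets M = borel_sets X" for M
  proof -
    have "integrable M f" using f01 by (intro integrable_bounded_borel[OF that fm, of 1]) fastforce
    moreover have "integrable M (indicator A :: 'b \<Rightarrow> real)"
      by (rule integrable_bounded_borel[OF that Am, of 1]) (auto simp: indicator_def)
    ultimately have "integral\<^sup>L M g = integral\<^sup>L M f - integral\<^sup>L M (indicator A)"
      unfolding g_def by (rule Bochner_Integration.integral_diff)
    then show ?thesis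
      using borel_sets_subset[OF A] space_eq_topspace[OF that(2)] by (simp add: Int_absorb2)
  qed
  have "sint X \<nu> f - \<nu> A = integral\<^sup>L ?P g - integral\<^sup>L ?N g"
    using measure_jordan_diff[OF sm A]
    by (simp add: sint_def integral_g finite_measure_jordan_pos finite_measure_jordan_neg)
  moreover have "\<bar>integral\<^sup>L ?P g\<bar> \<le> measure ?P (U - C)"
    by (rule abs_integral_le_measure[OF finite_measure_jordan_pos sets_jordan_pos D gm gle])
  moreover have "\<bar>integral\<^sup>L ?N g\<bar> \<le> measure ?N (U - C)"
    by (rule abs_integral_le_measure[OF finite_measure_jordan_neg sets_jordan_neg D gm gle])
  ultimately have "\<bar>sint X \<nu> f - \<nu> A\<bar> \<le> measure ?P (U - C) + measure ?N (U - C)"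
    by linarith
  also have "\<dots> = variation X \<nu> (U - C)" by (rule measure_jordan_add[OF sm D])
  finally show ?thesis .
qed

lemma regular_sm_common_approx:
  assumes H: "Hausdorff_space X" and r: "regular_sm X \<nu>1" "regular_sm X \<nu>2"
    and sm: "signed_measure X \<nu>1" "signed_measure X \<nu>2"
    and A: "A \<in> borel_sets X" and e: "0 < e"
  obtains C U where "compactin X C" "openin X U" "C \<subseteq> A" "A \<subseteq> U"
    "variation X \<nu>1 (U - C) < e" "variation X \<nu>2 (U - C) < e"
proof -
  obtain C1 U1 where c1: "compactin X C1" "openin X U1" "C1 \<subseteq> A" "A \<subseteq> U1" "variation X \<nu>1 (U1 - C1) < e"
    using r(1) A e unfolding regular_sm_def by meson
  obtain C2 U2 where c2: "compactin X C2" "openin X U2" "C2 \<subseteq> A" "A \<subseteq> U2" "variation X \<nu>2 (U2 - C2) < e"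
    using r(2) A e unfolding regular_sm_def by meson
  have "compactin X (C1 \<union> C2)" "openin X (U1 \<inter> U2)" using c1 c2 compactin_Un by auto
  moreover have "U1 \<inter> U2 - (C1 \<union> C2) \<subseteq> U1 - C1" "U1 \<inter> U2 - (C1 \<union> C2) \<subseteq> U2 - C2" by auto
  ultimately have "variation X \<nu>1 (U1 \<inter> U2 - (C1 \<union> C2)) \<le> variation X \<nu>1 (U1 - C1)"
    "variation X \<nu>2 (U1 \<inter> U2 - (C1 \<union> C2)) \<le> variation X \<nu>2 (U2 - C2)"
    using c1(1,2) c2(1,2) by (auto intro!: variation_mono sm borel_sets_openin_Diff_compactin[OF H])
  then show thesis
    using c1 c2 by (intro that[of "C1 \<union> C2" "U1 \<inter> U2"] compactin_Un) auto
qed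

lemma Urysohn_compactin_openin:
  assumes X: "compact_space X" "Hausdorff_space X" and C: "compactin X C" and U: "openin X U"
    and CU: "C \<subseteq> U"
  obtains f where "continuous_map X euclideanreal f" "\<And>x. x \<in> topspace X \<Longrightarrow> 0 \<le> f x \<and> f x \<le> 1"
    "\<And>x. x \<in> C \<Longrightarrow> f x = 1" "\<And>x. x \<in> topspace X - U \<Longrightarrow> f x = 0"
proof -
  have "normal_space X" using X compact_Hausdorff_or_regular_imp_normal_space by blast
  moreover have "closedin X (topspace X - U)" "closedin X C" "disjnt (topspace X - U) C"
    using U compactin_imp_closedin[OF X(2) C] CU by (auto simp: disjnt_def)
  ultimately obtain f where f: "continuous_map X (top_of_set {0..1::real}) f"
      "f ` (topspace X - U) \<subseteq> {0}" "f ` C \<subseteq> {1}"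
    using Urysohn_lemma[of X "topspace X - U" C 0 1] by auto
  show thesis
  proof (rule that)
    show "continuous_map X euclideanreal f" using f(1) continuous_map_in_subtopology by blast
    show "0 \<le> f x \<and> f x \<le> 1" if "x \<in> topspace X" for x
      using f(1) that unfolding continuous_map_def by auto
  qed (use f(2,3) in auto)
qed

lemma Mreg_eqI:
  assumes X: "compact_space X" "Hausdorff_space X"
    and m: "\<nu>1 \<in> Mreg X" "\<nu>2 \<in> Mreg X"
    and eq: "\<And>f. f \<in> CK X \<Longrightarrow> sint X \<nu>1 f = sint X \<nu>2 f"
  shows "\<nu>1 = \<nu>2"
proof
  fix A
  have sm: "signed_measure X \<nu>1" "signed_measure X \<nu>2" and r: "regular_sm X \<nu>1" "regular_sm X \<nu>2"
    using m by (simp_all add: Mreg_def)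
  show "\<nu>1 A = \<nu>2 A"
  proof (cases "A \<in> borel_sets X")
    case False
    then show ?thesis using sm by (simp add: signed_measure_def)
  next
    case A: True
    have approx: "\<bar>\<nu>1 A - \<nu>2 A\<bar> \<le> 2 * e" if e: "0 < e" for e
    proof -
      obtain C U where CU: "compactin X C" "openin X U" "C \<subseteq> A" "A \<subseteq> U"
        "variation X \<nu>1 (U - C) < e" "variation X \<nu>2 (U - C) < e"
        by (rule regular_sm_common_approx[OF X(2) r sm A e])
      have "C \<subseteq> U" using CU(3,4) by blast
      then obtain f where fc: "continuous_map X euclideanreal f"
        and f01: "\<And>x. x \<in> topspace X \<Longrightarrow> 0 \<le> f x \<and> f x \<le> 1"
        and f1: "\<And>x. x \<in> C \<Longrightarrow> f x = 1" and f0: "\<And>x. x \<in> topspace X - U \<Longrightarrow> f x = 0"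
        using Urysohn_compactin_openin[OF X CU(1,2)] by metis
      have "\<bar>sint X \<nu>1 f - \<nu>1 A\<bar> \<le> variation X \<nu>1 (U - C)"
        by (rule sint_urysohn_approx[OF sm(1) X(2) A CU(1,3,2,4) fc f01 f1 f0])
      moreover have "\<bar>sint X \<nu>2 f - \<nu>2 A\<bar> \<le> variation X \<nu>2 (U - C)"
        by (rule sint_urysohn_approx[OF sm(2) X(2) A CU(1,3,2,4) fc f01 f1 f0])
      moreover have "sint X \<nu>1 f = sint X \<nu>2 f" using eq fc by (simp add: CK_def)
      ultimately show ?thesis using CU(5,6) by linarith
    qed
    have "\<bar>\<nu>1 A - \<nu>2 A\<bar> \<le> 0 + e" if "0 < e" for e
      using approx[of "e / 2"] that by simp
    then have "\<bar>\<nu>1 A - \<nu>2 A\<bar> \<le> 0" by (rule field_le_epsilon)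
    then show ?thesis by simp
  qed
qed

section \<open>Composition operators\<close>

definition pushforward :: "'b topology \<Rightarrow> ('b \<Rightarrow> 'b) \<Rightarrow> ('b set \<Rightarrow> real) \<Rightarrow> 'b set \<Rightarrow> real" where
  "pushforward X \<phi> \<mu> = (\<lambda>A. if A \<in> borel_sets X then \<mu> {x \<in> topspace X. \<phi> x \<in> A} else 0)"

lemma signed_measure_pushforward:
  assumes sm: "signed_measure X \<mu>" and c: "continuous_map X X \<phi>"
  shows "signed_measure X (pushforward X \<phi> \<mu>)"
  unfolding signed_measure_def
proof (intro conjI allI impI)
  show "A \<notin> borel_sets X \<Longrightarrow> pushforward X \<phi> \<mu> A = 0" for A by (simp add: pushforward_def)
  show "pushforward X \<phi> \<mu> {} = 0"
    using signed_measure_empty[OF sm] by (simp add: pushforward_def borel_sets_empty)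
  fix A :: "nat \<Rightarrow> _" assume r: "range A \<subseteq> borel_sets X" and d: "disjoint_family A"
  let ?pre = "\<lambda>B. {x \<in> topspace X. \<phi> x \<in> B}"
  have "range (\<lambda>n. ?pre (A n)) \<subseteq> borel_sets X"
    using borel_sets_preimage[OF c] range_subsetD[OF r] by blast
  moreover have "disjoint_family (\<lambda>n. ?pre (A n))"
    using d unfolding disjoint_family_on_def by blast
  ultimately have "(\<lambda>n. \<mu> (?pre (A n))) sums \<mu> (\<Union>n. ?pre (A n))"
    using sm unfolding signed_measure_def by blast
  moreover have "(\<Union>n. ?pre (A n)) = ?pre (\<Union>n. A n)" by auto
  ultimately show "(\<lambda>n. pushforward X \<phi> \<mu> (A n)) sums pushforward X \<phi> \<mu> (\<Union>n. A n)"
    using r borel_sets_UN[OF r] by (simp add: pushforward_def range_subsetD)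
qed

lemma variation_pushforward_le:
  assumes sm: "signed_measure X \<mu>" and c: "continuous_map X X \<phi>" and A: "A \<in> borel_sets X"
  shows "variation X (pushforward X \<phi> \<mu>) A \<le> variation X \<mu> {x \<in> topspace X. \<phi> x \<in> A}"
proof -
  let ?pre = "\<lambda>B. {x \<in> topspace X. \<phi> x \<in> B}"
  have pre_mono: "?pre B \<subseteq> ?pre A" if "B \<subseteq> A" for B using that by auto
  have "pos_variation X (pushforward X \<phi> \<mu>) A \<le> pos_variation X \<mu> (?pre A)"
  proof (rule pos_variation_least)
    fix B assume B: "B \<in> borel_sets X" "B \<subseteq> A"
    show "pushforward X \<phi> \<mu> B \<le> pos_variation X \<mu> (?pre A)"
      using pos_variation_upper[OF sm borel_sets_preimage[OF c B(1)] pre_mono[OF B(2)]] B(1)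
      by (simp add: pushforward_def)
  qed
  moreover have "pos_variation X (\<lambda>B. - pushforward X \<phi> \<mu> B) A \<le> pos_variation X (\<lambda>B. - \<mu> B) (?pre A)"
  proof (rule pos_variation_least)
    fix B assume B: "B \<in> borel_sets X" "B \<subseteq> A"
    show "- pushforward X \<phi> \<mu> B \<le> pos_variation X (\<lambda>B. - \<mu> B) (?pre A)"
      using pos_variation_upper[OF signed_measure_uminus[OF sm] borel_sets_preimage[OF c B(1)] pre_mono[OF B(2)]] B(1)
      by (simp add: pushforward_def)
  qed
  ultimately show ?thesis
    using variation_eq[OF signed_measure_pushforward[OF sm c] A] variation_eq[OF sm borel_sets_preimage[OF c A]]
    by simp
qed

text \<open>Inner regularity of the image measure comes from images of compact sets, outer regularity
  from complements of images of compact subsets of the preimage of the complement.\<close>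

lemma regular_pushforward:
  assumes H: "Hausdorff_space X" and m: "\<mu> \<in> Mreg X" and c: "continuous_map X X \<phi>"
  shows "regular_sm X (pushforward X \<phi> \<mu>)"
  unfolding regular_sm_def
proof (intro ballI allI impI)
  fix A and e :: real assume A: "A \<in> borel_sets X" and e: "0 < e"
  let ?pre = "\<lambda>B. {x \<in> topspace X. \<phi> x \<in> B}"
  have sm: "signed_measure X \<mu>" and r: "regular_sm X \<mu>" using m by (simp_all add: Mreg_def)
  have pA: "?pre A \<in> borel_sets X" "?pre (topspace X - A) \<in> borel_sets X"
    using borel_sets_preimage[OF c] A borel_sets_Diff[OF borel_sets_topspace A] by blast+
  obtain C1 U1 where c1: "compactin X C1" "openin X U1" "C1 \<subseteq> ?pre A" "?pre A \<subseteq> U1"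
      "variation X \<mu> (U1 - C1) < e/2"
    using r pA(1) e unfolding regular_sm_def by (meson half_gt_zero)
  obtain C2 U2 where c2: "compactin X C2" "openin X U2" "C2 \<subseteq> ?pre (topspace X - A)"
      "?pre (topspace X - A) \<subseteq> U2" "variation X \<mu> (U2 - C2) < e/2"
    using r pA(2) e unfolding regular_sm_def by (meson half_gt_zero)
  define C where "C = \<phi> ` C1"
  define U where "U = topspace X - \<phi> ` C2"
  have Cc: "compactin X C" unfolding C_def by (rule image_compactin[OF c1(1) c])
  have Uo: "openin X U"
    unfolding U_def using compactin_imp_closedin[OF H image_compactin[OF c2(1) c]] by blast
  have CA: "C \<subseteq> A" and AU: "A \<subseteq> U"
    using c1(3) c2(3) borel_sets_subset[OF A] by (auto simp: C_def U_def)
  have b: "U - C \<in> borel_sets X" "U1 - C1 \<in> borel_sets X" "U2 - C2 \<in> borel_sets X"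
    using borel_sets_openin_Diff_compactin[OF H] Uo Cc c1(1,2) c2(1,2) by auto
  have sub: "?pre (U - C) \<subseteq> (U1 - C1) \<union> (U2 - C2)"
  proof
    fix y assume y: "y \<in> ?pre (U - C)"
    then have "y \<notin> C1" "y \<notin> C2" "y \<in> topspace X" by (auto simp: U_def C_def)
    moreover have "\<phi> y \<in> topspace X" using c \<open>y \<in> topspace X\<close> unfolding continuous_map_def by blast
    ultimately show "y \<in> (U1 - C1) \<union> (U2 - C2)" using c1(4) c2(4) by auto
  qed
  have "variation X (pushforward X \<phi> \<mu>) (U - C) \<le> variation X \<mu> (?pre (U - C))"
    by (rule variation_pushforward_le[OF sm c b(1)])
  also have "\<dots> \<le> variation X \<mu> ((U1 - C1) \<union> (U2 - C2))"
    by (rule variation_mono[OF sm borel_sets_preimage[OF c b(1)] borel_sets_Un[OF b(2,3)] sub])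
  also have "\<dots> \<le> variation X \<mu> (U1 - C1) + variation X \<mu> (U2 - C2)"
    by (rule variation_Un_le[OF sm b(2,3)])
  finally have "variation X (pushforward X \<phi> \<mu>) (U - C) < e" using c1(5) c2(5) by linarith
  then show "\<exists>C U. compactin X C \<and> openin X U \<and> C \<subseteq> A \<and> A \<subseteq> U \<and>
      variation X (pushforward X \<phi> \<mu>) (U - C) < e"
    using Cc Uo CA AU by blast
qed

lemma sint_pushforward:
  fixes f :: "'b \<Rightarrow> real"
  assumes sm: "signed_measure X \<mu>" and c: "continuous_map X X \<phi>"
    and f: "f \<in> borel_measurable (borel_measure X)" "\<And>x. x \<in> topspace X \<Longrightarrow> \<bar>f x\<bar> \<le> B"
  shows "sint X (pushforward X \<phi> \<mu>) f = sint X \<mu> (f \<circ> \<phi>)"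
proof -
  let ?P = "jordan_pos X \<mu>" and ?N = "jordan_neg X \<mu>"
  have mP: "\<phi> \<in> measurable ?P (borel_measure X)"
    using continuous_map_measurable[OF c]
      measurable_cong_sets[of ?P "borel_measure X" "borel_measure X" "borel_measure X"] by simp
  have mN: "\<phi> \<in> measurable ?N (borel_measure X)"
    using continuous_map_measurable[OF c]
      measurable_cong_sets[of ?N "borel_measure X" "borel_measure X" "borel_measure X"] by simp
  let ?Ms = "[(1, distr ?P (borel_measure X) \<phi>), (-1, distr ?N (borel_measure X) \<phi>)]"
  have "sint X (pushforward X \<phi> \<mu>) f = lincomb_integral ?Ms f"
  proof (rule sint_lincomb[OF signed_measure_pushforward[OF sm c] _ _ f])
    show "borel_measures X ?Ms"
      using finite_measure.finite_measure_distr[OF finite_measure_jordan_pos mP]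
        finite_measure.finite_measure_distr[OF finite_measure_jordan_neg mN] by simp
    fix A assume A: "A \<in> borel_sets X"
    have "\<phi> -` A \<inter> topspace X = {x \<in> topspace X. \<phi> x \<in> A}" by auto
    then show "pushforward X \<phi> \<mu> A = lincomb_measure ?Ms A"
      using measure_distr[OF mP, of A] measure_distr[OF mN, of A] A
        measure_jordan_diff[OF sm borel_sets_preimage[OF c A]]
      by (simp add: pushforward_def)
  qed
  also have "\<dots> = sint X \<mu> (f \<circ> \<phi>)"
    using integral_distr[OF mP f(1)] integral_distr[OF mN f(1)] by (simp add: sint_def comp_def)
  finally show ?thesis .
qed

lemma adj_composition:
  assumes X: "compact_space X" "Hausdorff_space X" and c: "continuous_map X X \<phi>"
    and m: "\<mu> \<in> Mreg X"
  shows "adj X (\<lambda>f. f \<circ> \<phi>) \<mu> = pushforward X \<phi> \<mu>"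
proof -
  have sm: "signed_measure X \<mu>" using m by (simp add: Mreg_def)
  have P: "pushforward X \<phi> \<mu> \<in> Mreg X \<and> (\<forall>f\<in>CK X. sint X (pushforward X \<phi> \<mu>) f = sint X \<mu> (f \<circ> \<phi>))"
  proof (intro conjI ballI)
    show "pushforward X \<phi> \<mu> \<in> Mreg X"
      using signed_measure_pushforward[OF sm c] regular_pushforward[OF X(2) m c] by (simp add: Mreg_def)
    fix f assume f: "f \<in> CK X"
    obtain B where "\<forall>x\<in>topspace X. \<bar>f x\<bar> \<le> B" using CK_bound[OF X(1) f] by blast
    then show "sint X (pushforward X \<phi> \<mu>) f = sint X \<mu> (f \<circ> \<phi>)"
      using f by (intro sint_pushforward[OF sm c continuous_map_borel_measurable]) (auto simp: CK_def)
  qed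
  then show ?thesis
    unfolding adj_def using Mreg_eqI[OF X] by (intro the1_equality) auto
qed

lemma pushforward_dirac:
  assumes "continuous_map X X \<phi>" "a \<in> topspace X"
  shows "pushforward X \<phi> (dirac_sm X a) = dirac_sm X (\<phi> a)"
  using borel_sets_preimage[OF assms(1)] assms(2)
  by (auto simp: pushforward_def dirac_sm_def indicator_def fun_eq_iff)

lemma bounded_additive_signed_measure:
  assumes sm: "signed_measure X \<nu>"
  shows "bounded_additive X \<nu> (tv_norm X \<nu>)"
  unfolding bounded_additive_def
proof (intro conjI ballI signed_measure_finitely_additive[OF sm])
  fix A assume A: "A \<in> borel_sets X"
  have "\<bar>\<nu> A\<bar> \<le> variation X \<nu> A" by (rule abs_le_variation[OF sm A])
  also have "\<dots> \<le> tv_norm X \<nu>"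
    unfolding tv_norm_def by (rule variation_mono[OF sm A borel_sets_topspace borel_sets_subset[OF A]])
  finally show "\<bar>\<nu> A\<bar> \<le> tv_norm X \<nu>" .
qed

lemma bounded_additive_pushforward:
  assumes m: "\<mu> \<in> Mreg X" and c: "continuous_map X X \<phi>"
  shows "bounded_additive X (pushforward X \<phi> \<mu>) (tv_norm X \<mu>)"
proof -
  have sm: "signed_measure X \<mu>" using m by (simp add: Mreg_def)
  have "\<bar>\<mu> B\<bar> \<le> tv_norm X \<mu>" if "B \<in> borel_sets X" for B
    using bounded_additive_signed_measure[OF sm] that by (simp add: bounded_additive_def)
  then show ?thesis
    using signed_measure_finitely_additive[OF signed_measure_pushforward[OF sm c]] borel_sets_preimage[OF c]
    by (simp add: bounded_additive_def pushforward_def)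
qed

lemma borel_measurable_indicator_times:
  assumes "bborel X g" "A \<in> borel_sets X"
  shows "(\<lambda>x. indicator A x * g x) \<in> borel_measurable (borel_measure X)"
  using bborel_borel_measurable[OF assms(1)] assms(2)
  by (intro borel_measurable_times borel_measurable_indicator) auto

lemma mult_dual_dirac:
  assumes g: "bborel X g" and a: "a \<in> topspace X"
  shows "mult_dual X g (dirac_sm X a) = (\<lambda>A. g a * dirac_sm X a A)"
proof
  fix A
  obtain B where B: "\<forall>x\<in>topspace X. \<bar>g x\<bar> \<le> B" using bborel_bound[OF g] by blast
  show "mult_dual X g (dirac_sm X a) A = g a * dirac_sm X a A"
  proof (cases "A \<in> borel_sets X")
    case True
    have "sint X (dirac_sm X a) (\<lambda>x. indicator A x * g x) = indicator A a * g a"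
      by (rule sint_dirac[OF a borel_measurable_indicator_times[OF g True], of B])
        (use B in \<open>auto simp: indicator_def\<close>)
    then show ?thesis using True by (simp add: mult_dual_def dirac_sm_def)
  qed (simp add: mult_dual_def dirac_sm_def)
qed

lemma bounded_additive_mult_dual:
  assumes g: "bborel X g" and B: "\<And>x. x \<in> topspace X \<Longrightarrow> \<bar>g x\<bar> \<le> Bg" "0 \<le> Bg"
    and m: "\<mu> \<in> Mreg X"
  shows "bounded_additive X (mult_dual X g \<mu>) (Bg * tv_norm X \<mu>)"
  unfolding bounded_additive_def finitely_additive_def
proof (intro conjI ballI impI)
  have sm: "signed_measure X \<mu>" using m by (simp add: Mreg_def)
  show "mult_dual X g \<mu> {} = 0" by (simp add: mult_dual_def sint_def)
  fix A A' assume A: "A \<in> borel_sets X" and A': "A' \<in> borel_sets X" and d: "A \<inter> A' = {}"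
  have int: "integrable M (\<lambda>x. indicator C x * g x)"
    if "C \<in> borel_sets X" "finite_measure M" "sets M = borel_sets X" for C M
    by (rule integrable_bounded_borel[OF that(2,3) borel_measurable_indicator_times[OF g that(1)], of Bg])
      (use B in \<open>auto simp: indicator_def\<close>)
  have ind: "(\<lambda>x. indicator (A \<union> A') x * g x) = (\<lambda>x. indicator A x * g x + indicator A' x * g x)"
    using d by (auto simp: indicator_def fun_eq_iff)
  have add: "integral\<^sup>L M (\<lambda>x. indicator (A \<union> A') x * g x) =
      integral\<^sup>L M (\<lambda>x. indicator A x * g x) + integral\<^sup>L M (\<lambda>x. indicator A' x * g x)"
    if "finite_measure M" "sets M = borel_sets X" for M
    unfolding ind by (rule Bochner_Integration.integral_add; rule int) (use A A' that in auto)
  show "mult_dual X g \<mu> (A \<union> A') = mult_dual X g \<mu> A + mult_dual X g \<mu> A'"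
    using A A' borel_sets_Un[OF A A'] add[OF finite_measure_jordan_pos sets_jordan_pos]
      add[OF finite_measure_jordan_neg sets_jordan_neg]
    by (simp add: mult_dual_def sint_def)
next
  fix A assume A: "A \<in> borel_sets X"
  have sm: "signed_measure X \<mu>" using m by (simp add: Mreg_def)
  have "\<bar>sint X \<mu> (\<lambda>x. indicator A x * g x)\<bar> \<le>
      Bg * (measure (jordan_pos X \<mu>) (topspace X) + measure (jordan_neg X \<mu>) (topspace X))"
    by (rule sint_bound) (use B in \<open>auto simp: indicator_def abs_mult\<close>)
  also have "\<dots> = Bg * tv_norm X \<mu>"
    unfolding tv_norm_def by (simp add: measure_jordan_add[OF sm borel_sets_topspace])
  finally show "\<bar>mult_dual X g \<mu> A\<bar> \<le> Bg * tv_norm X \<mu>" using A by (simp add: mult_dual_def)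
qed

context
  fixes X :: "'b topology" and \<phi> :: "'b \<Rightarrow> 'b"
  assumes X: "compact_space X" "Hausdorff_space X" and c: "continuous_map X X \<phi>"
begin

lemma Aop_composition:
  "\<mu> \<in> Mreg X \<Longrightarrow> Aop X (\<lambda>f. f \<circ> \<phi>) g \<mu> = (\<lambda>A. pushforward X \<phi> \<mu> A + mult_dual X g \<mu> A)"
  unfolding Aop_def adj_composition[OF X c] ..

lemma bounded_additive_Aop:
  assumes m: "\<mu> \<in> Mreg X" and g: "bborel X g"
    and B: "\<And>x. x \<in> topspace X \<Longrightarrow> \<bar>g x\<bar> \<le> Bg" "0 \<le> Bg"
  shows "bounded_additive X (Aop X (\<lambda>f. f \<circ> \<phi>) g \<mu>) (tv_norm X \<mu> + Bg * tv_norm X \<mu>)"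
  unfolding Aop_composition[OF m]
  using bounded_additive_add[OF bounded_additive_pushforward[OF m c] bounded_additive_mult_dual[OF g B m], of 1]
  by simp

lemma Aop_dirac:
  assumes a: "a \<in> topspace X" and g: "bborel X g"
  shows "Aop X (\<lambda>f. f \<circ> \<phi>) g (dirac_sm X a) = (\<lambda>A. dirac_sm X (\<phi> a) A + g a * dirac_sm X a A)"
  unfolding Aop_composition[OF dirac_in_Mreg[OF X(2) a]] pushforward_dirac[OF c a] mult_dual_dirac[OF g a] ..

lemma atom_near_Aop_dirac:
  assumes a: "a \<in> topspace X" "\<phi> a \<noteq> a" and g: "bborel X g" and d: "bounded_additive X d K"
    and near: "tv_norm X (\<lambda>A. Aop X (\<lambda>f. f \<circ> \<phi>) g (dirac_sm X a) A - d A) < 1/2"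
  shows "1/2 < \<bar>d {\<phi> a}\<bar>"
proof -
  let ?x = "Aop X (\<lambda>f. f \<circ> \<phi>) g (dirac_sm X a)"
  obtain Bg where Bg: "0 \<le> Bg" "\<And>x. x \<in> topspace X \<Longrightarrow> \<bar>g x\<bar> \<le> Bg" using bborel_bound[OF g] by auto
  have "bounded_additive X ?x (1 + Bg * 1)"
    using bounded_additive_Aop[OF dirac_in_Mreg[OF X(2) a(1)] g Bg(2,1)] tv_norm_dirac[OF a(1)] by simp
  then have "\<bar>?x {\<phi> a} - d {\<phi> a}\<bar> \<le> tv_norm X (\<lambda>A. ?x A - d A)"
    using bounded_additive_abs_le_tv_norm[OF bounded_additive_add[OF _ d, of _ _ "-1"]]
      borel_sets_singleton[OF X(2)] c a(1) by (simp add: continuous_map_def Pi_iff)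
  moreover have "\<phi> a \<in> topspace X" using c a(1) by (simp add: continuous_map_def Pi_iff)
  then have "?x {\<phi> a} = 1"
    using borel_sets_singleton[OF X(2)] a by (simp add: Aop_dirac[OF a(1) g]) (simp add: dirac_sm_def)
  ultimately show ?thesis using near by linarith
qed

end

section \<open>The ladder system space\<close>

lemma ladder_systemD:
  assumes "ladder_system s" "lim_ord \<alpha>"
  shows "strict_mono (s \<alpha>)" "\<And>n. \<not> lim_ord (s \<alpha> n)" "\<And>n. s \<alpha> n < \<alpha>"
    "\<And>\<beta>. \<beta> < \<alpha> \<Longrightarrow> \<exists>n. \<beta> < s \<alpha> n"
  using assms unfolding ladder_system_def by blast+

definition ladder_nbhd :: "('a::wellorder \<Rightarrow> nat \<Rightarrow> 'a) \<Rightarrow> 'a \<Rightarrow> 'a set" where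
  "ladder_nbhd s a = (if lim_ord a then insert a (range (s a)) else {a})"

lemma ladder_nbhd_self: "a \<in> ladder_nbhd s a"
  by (simp add: ladder_nbhd_def)

lemma countable_ladder_nbhd: "countable (ladder_nbhd s a)"
  by (simp add: ladder_nbhd_def)

lemma lim_ord_in_ladder_nbhd:
  assumes "ladder_system s" "x \<in> ladder_nbhd s a" "lim_ord x"
  shows "x = a"
  using assms ladder_systemD(2)[OF assms(1)] by (auto simp: ladder_nbhd_def split: if_splits)

lemma openin_ladder_nonlim: "(\<And>x. x \<in> A \<Longrightarrow> \<not> lim_ord x) \<Longrightarrow> openin (ladder_top s) A"
  by (auto simp: openin_ladder_top)

lemma openin_ladder_Diff_finite:
  assumes U: "openin (ladder_top s) U" and F: "finite F"
  shows "openin (ladder_top s) (U - F)"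
  unfolding openin_ladder_top
proof (intro ballI impI)
  fix \<alpha> assume "\<alpha> \<in> U - F" "lim_ord \<alpha>"
  then have "finite ((range (s \<alpha>) - U) \<union> F)" using U F by (simp add: openin_ladder_top)
  then show "finite (range (s \<alpha>) - (U - F))" by (rule finite_subset[rotated]) blast
qed

lemma closedin_ladder_top: "closedin (ladder_top s) C \<longleftrightarrow> openin (ladder_top s) (- C)"
  by (simp add: closedin_def Compl_eq_Diff_UNIV)

lemma closedin_ladder_finite: "finite E \<Longrightarrow> closedin (ladder_top s) E"
  unfolding closedin_ladder_top openin_ladder_top by (auto elim: finite_subset[rotated])

lemma openin_ladder_nbhd: "ladder_system s \<Longrightarrow> openin (ladder_top s) (ladder_nbhd s a)"
  unfolding openin_ladder_top ladder_nbhd_def using ladder_systemD(2) by auto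

text \<open>Two ladders meet in a finite set, as the shorter one is bounded below the longer one's limit.\<close>

lemma finite_ladder_Int:
  assumes ls: "ladder_system s" and a: "lim_ord \<alpha>" and b: "lim_ord \<beta>" and lt: "\<alpha> < \<beta>"
  shows "finite (range (s \<alpha>) \<inter> range (s \<beta>))"
proof -
  obtain n0 where n0: "\<alpha> < s \<beta> n0" using ladder_systemD(4)[OF ls b lt] by blast
  have "range (s \<alpha>) \<inter> range (s \<beta>) \<subseteq> s \<beta> ` {..<n0}"
  proof
    fix x assume "x \<in> range (s \<alpha>) \<inter> range (s \<beta>)"
    then obtain m n where m: "x = s \<alpha> m" and n: "x = s \<beta> n" by blast
    have "x < \<alpha>" using m ladder_systemD(3)[OF ls a] by simp
    then have "\<not> n0 \<le> n"
      using n n0 strict_mono_less_eq[OF ladder_systemD(1)[OF ls b]] by (metis less_asym order.strict_trans2)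
    then show "x \<in> s \<beta> ` {..<n0}" using n by auto
  qed
  then show ?thesis using finite_subset by blast
qed

lemma finite_ladder_nbhd_Int:
  assumes ls: "ladder_system s" and ne: "a \<noteq> b"
  shows "finite (ladder_nbhd s a \<inter> ladder_nbhd s b)"
proof (cases "lim_ord a \<and> lim_ord b")
  case True
  then have "ladder_nbhd s a \<inter> ladder_nbhd s b = range (s a) \<inter> range (s b)"
    using ne ladder_systemD(2)[OF ls] by (auto simp: ladder_nbhd_def)
  moreover have "a < b \<or> b < a" using ne by auto
  ultimately show ?thesis using finite_ladder_Int[OF ls] True by (metis inf_commute)
qed (auto simp: ladder_nbhd_def)

lemma closedin_ladder_nbhd:
  assumes ls: "ladder_system s"
  shows "closedin (ladder_top s) (ladder_nbhd s a)"
  unfolding closedin_ladder_top openin_ladder_top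
proof (intro ballI impI)
  fix \<beta> assume b: "\<beta> \<in> - ladder_nbhd s a" "lim_ord \<beta>"
  then have "\<beta> \<noteq> a" using ladder_nbhd_self by auto
  moreover have "range (s \<beta>) - - ladder_nbhd s a \<subseteq> ladder_nbhd s \<beta> \<inter> ladder_nbhd s a"
    using b by (auto simp: ladder_nbhd_def)
  ultimately show "finite (range (s \<beta>) - - ladder_nbhd s a)"
    using finite_ladder_nbhd_Int[OF ls] finite_subset by blast
qed

lemma compactin_ladder_nbhd:
  assumes ls: "ladder_system s"
  shows "compactin (ladder_top s) (ladder_nbhd s a)"
proof (cases "lim_ord a")
  case True
  show ?thesis unfolding compactin_def
  proof (intro conjI allI impI)
    show "ladder_nbhd s a \<subseteq> topspace (ladder_top s)" by simp
    fix \<U> assume U: "(\<forall>U\<in>\<U>. openin (ladder_top s) U) \<and> ladder_nbhd s a \<subseteq> \<Union>\<U>"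
    then have "\<forall>x\<in>ladder_nbhd s a. \<exists>V. x \<in> V \<and> V \<in> \<U>" by blast
    from bchoice[OF this] obtain h where h: "\<And>x. x \<in> ladder_nbhd s a \<Longrightarrow> x \<in> h x \<and> h x \<in> \<U>"
      by blast
    let ?F = "insert (h a) (h ` (range (s a) - h a))"
    have "finite (range (s a) - h a)"
      using U h[OF ladder_nbhd_self] True by (auto simp: openin_ladder_top)
    moreover have "?F \<subseteq> \<U>" using h by (auto simp: ladder_nbhd_def True)
    moreover have "ladder_nbhd s a \<subseteq> \<Union>?F"
    proof
      fix x assume x: "x \<in> ladder_nbhd s a"
      show "x \<in> \<Union>?F"
      proof (cases "x \<in> h a")
        case False
        then have "x \<in> range (s a) - h a" using x h[OF ladder_nbhd_self] by (auto simp: ladder_nbhd_def True)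
        then show ?thesis using h[OF x] by blast
      qed blast
    qed
    ultimately show "\<exists>\<F>. finite \<F> \<and> \<F> \<subseteq> \<U> \<and> ladder_nbhd s a \<subseteq> \<Union>\<F>"
      by (intro exI[of _ ?F]) simp
  qed
next
  case False
  then show ?thesis by (simp add: ladder_nbhd_def finite_imp_compactin)
qed

lemma finite_lim_ord_compactin:
  assumes ls: "ladder_system s" and C: "compactin (ladder_top s) C"
  shows "finite {x \<in> C. lim_ord x}"
proof -
  have "(\<forall>U\<in>ladder_nbhd s ` C. openin (ladder_top s) U) \<and> C \<subseteq> \<Union>(ladder_nbhd s ` C)"
    using openin_ladder_nbhd[OF ls] ladder_nbhd_self by blast
  then obtain \<F> where F: "finite \<F>" "\<F> \<subseteq> ladder_nbhd s ` C" "C \<subseteq> \<Union>\<F>"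
    using C unfolding compactin_def by meson
  then obtain C' where C': "C' \<subseteq> C" "finite C'" "\<F> = ladder_nbhd s ` C'"
    by (meson finite_subset_image)
  have "{x \<in> C. lim_ord x} \<subseteq> C'"
    using F(3) C'(3) lim_ord_in_ladder_nbhd[OF ls] by blast
  then show ?thesis using C'(2) finite_subset by blast
qed

lemma topspace_K_top [simp]: "topspace (K_top s) = UNIV"
proof -
  have "openin (K_top s) UNIV" by (simp add: openin_K_top Kopen_def openin_ladder_top)
  then show ?thesis using openin_subset by blast
qed

lemma openin_K_top_Some: "openin (ladder_top s) A \<Longrightarrow> openin (K_top s) (Some ` A)"
  by (simp add: openin_K_top Kopen_def inj_vimage_image_eq)

lemma openin_K_top_compl_Some:
  assumes "compactin (ladder_top s) C" "closedin (ladder_top s) C"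
  shows "openin (K_top s) (- (Some ` C))"
proof -
  have "Some -` (- (Some ` C)) = - C" by auto
  then show ?thesis using assms unfolding openin_K_top Kopen_def closedin_ladder_top by simp
qed

lemma Hausdorff_K_top:
  assumes ls: "ladder_system s"
  shows "Hausdorff_space (K_top s)"
  unfolding Hausdorff_space_def
proof (intro allI impI)
  fix x y :: "'a option" assume "x \<in> topspace (K_top s) \<and> y \<in> topspace (K_top s) \<and> x \<noteq> y"
  then have xy: "x \<noteq> y" by blast
  have N: "openin (K_top s) (Some ` ladder_nbhd s b)" "openin (K_top s) (- Some ` ladder_nbhd s b)"
    "Some b \<in> Some ` ladder_nbhd s b" "None \<in> - Some ` ladder_nbhd s b"
    "disjnt (Some ` ladder_nbhd s b) (- Some ` ladder_nbhd s b)" for b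
    using ladder_nbhd_self openin_K_top_Some[OF openin_ladder_nbhd[OF ls]]
      openin_K_top_compl_Some[OF compactin_ladder_nbhd[OF ls] closedin_ladder_nbhd[OF ls]]
    by (auto simp: disjnt_def)
  consider a b where "x = Some a" "y = Some b" | b where "x = Some b" "y = None"
    | b where "x = None" "y = Some b"
    using xy by (cases x; cases y) auto
  then show "\<exists>U V. openin (K_top s) U \<and> openin (K_top s) V \<and> x \<in> U \<and> y \<in> V \<and> disjnt U V"
  proof cases
    case (1 a b)
    let ?F = "(ladder_nbhd s a \<inter> ladder_nbhd s b) - {a, b}"
    let ?U = "ladder_nbhd s a - insert b ?F" and ?V = "ladder_nbhd s b - insert a ?F"
    have "a \<noteq> b" using xy 1 by auto
    then have fin: "finite (insert b ?F)" "finite (insert a ?F)" using finite_ladder_nbhd_Int[OF ls] by auto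
    have "openin (K_top s) (Some ` ?U)" "openin (K_top s) (Some ` ?V)"
      using openin_K_top_Some[OF openin_ladder_Diff_finite[OF openin_ladder_nbhd[OF ls] fin(1)]]
        openin_K_top_Some[OF openin_ladder_Diff_finite[OF openin_ladder_nbhd[OF ls] fin(2)]] .
    moreover have "x \<in> Some ` ?U" "y \<in> Some ` ?V" "disjnt (Some ` ?U) (Some ` ?V)"
      using 1 \<open>a \<noteq> b\<close> ladder_nbhd_self[of a s] ladder_nbhd_self[of b s] by (auto simp: disjnt_def)
    ultimately show ?thesis by blast
  next
    case (2 b)
    then show ?thesis using N[of b] by blast
  next
    case (3 b)
    then show ?thesis using N[of b] disjnt_sym by blast
  qed
qed

lemma compact_K_top: "compact_space (K_top s)"
  unfolding compact_space_def compactin_def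
proof (intro conjI allI impI)
  show "topspace (K_top s) \<subseteq> topspace (K_top s)" by simp
  fix \<U> assume U: "(\<forall>U\<in>\<U>. openin (K_top s) U) \<and> topspace (K_top s) \<subseteq> \<Union>\<U>"
  then obtain V0 where V0: "V0 \<in> \<U>" "None \<in> V0" by auto
  then have "compactin (ladder_top s) (- (Some -` V0))"
    using U unfolding openin_K_top Kopen_def by blast
  moreover have "\<forall>W\<in>(\<lambda>W. Some -` W) ` \<U>. openin (ladder_top s) W"
    using U unfolding openin_K_top Kopen_def by blast
  moreover have "- (Some -` V0) \<subseteq> \<Union>((\<lambda>W. Some -` W) ` \<U>)"
  proof
    fix x
    have "Some x \<in> \<Union>\<U>" using U by auto
    then show "x \<in> \<Union>((\<lambda>W. Some -` W) ` \<U>)" by blast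
  qed
  ultimately obtain \<F>' where F': "finite \<F>'" "\<F>' \<subseteq> (\<lambda>W. Some -` W) ` \<U>" "- (Some -` V0) \<subseteq> \<Union>\<F>'"
    unfolding compactin_def by meson
  then obtain \<F> where F: "\<F> \<subseteq> \<U>" "finite \<F>" "\<F>' = (\<lambda>W. Some -` W) ` \<F>"
    by (meson finite_subset_image)
  have "topspace (K_top s) \<subseteq> \<Union>(insert V0 \<F>)"
  proof
    fix z show "z \<in> \<Union>(insert V0 \<F>)"
      using V0 F'(3) F(3) by (cases z) auto
  qed
  then show "\<exists>\<F>. finite \<F> \<and> \<F> \<subseteq> \<U> \<and> topspace (K_top s) \<subseteq> \<Union>\<F>" using F V0 by blast
qed

lemma continuous_map_indicator_clopen:
  assumes "openin X S" "openin X (topspace X - S)"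
  shows "continuous_map X euclideanreal (indicator S)"
  unfolding continuous_map_def
proof (intro conjI allI impI)
  show "indicator S \<in> topspace X \<rightarrow> topspace euclideanreal" by simp
  fix U :: "real set"
  have "{x \<in> topspace X. indicator S x \<in> U} =
      (if 1 \<in> U then S \<inter> topspace X else {}) \<union> (if 0 \<in> U then topspace X - S else {})"
    by (auto simp: indicator_def)
  moreover have "S \<inter> topspace X = S" using assms(1) openin_subset by blast
  ultimately show "openin X {x \<in> topspace X. indicator S x \<in> U}" using assms by auto
qed

lemma indicator_ladder_nbhd_in_CK:
  assumes ls: "ladder_system s" and "\<not> lim_ord \<xi>"
  shows "indicator (Some ` (ladder_nbhd s \<alpha> - {\<xi>})) \<in> CK (K_top s)"
proof -
  let ?W = "ladder_nbhd s \<alpha> - {\<xi>}"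
  have "closedin (ladder_top s) (- {\<xi>})"
    unfolding closedin_ladder_top using assms(2) by (auto intro: openin_ladder_nonlim)
  then have cW: "closedin (ladder_top s) ?W"
    using closedin_Int[OF closedin_ladder_nbhd[OF ls]] by (simp add: Diff_eq)
  then have "compactin (ladder_top s) ?W"
    by (rule closed_compactin[OF compactin_ladder_nbhd[OF ls] Diff_subset])
  then have "openin (K_top s) (topspace (K_top s) - Some ` ?W)"
    using openin_K_top_compl_Some[OF _ cW] by (simp add: Compl_eq_Diff_UNIV)
  moreover have "openin (K_top s) (Some ` ?W)"
    by (rule openin_K_top_Some[OF openin_ladder_Diff_finite[OF openin_ladder_nbhd[OF ls]]]) simp
  ultimately show ?thesis unfolding CK_def by (simp add: continuous_map_indicator_clopen)
qed

lemma ladder_mapD: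
  assumes "ladder_map \<phi>"
  shows "inj_on \<phi> (Some ` {x. \<not> lim_ord x})"
    "\<And>x. \<not> lim_ord x \<Longrightarrow> \<phi> (Some x) \<in> Some ` {\<alpha>. lim_ord \<alpha>}"
    "\<And>\<alpha>. lim_ord \<alpha> \<Longrightarrow> \<phi> (Some \<alpha>) = None" "\<phi> None = None"
  using assms unfolding ladder_map_def by blast+

definition ladder_image :: "('a option \<Rightarrow> 'a option) \<Rightarrow> 'a \<Rightarrow> 'a" where
  "ladder_image \<phi> a = the (\<phi> (Some a))"

lemma ladder_image:
  assumes "ladder_map \<phi>" "\<not> lim_ord a"
  shows "\<phi> (Some a) = Some (ladder_image \<phi> a)" "lim_ord (ladder_image \<phi> a)"
  using ladder_mapD(2)[OF assms] by (auto simp: ladder_image_def)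

lemma inj_on_ladder_image:
  assumes lm: "ladder_map \<phi>"
  shows "inj_on (ladder_image \<phi>) {a. \<not> lim_ord a}"
proof (rule inj_onI)
  fix x y assume x: "x \<in> {a. \<not> lim_ord a}" and y: "y \<in> {a. \<not> lim_ord a}"
    and "ladder_image \<phi> x = ladder_image \<phi> y"
  then have "\<phi> (Some x) = \<phi> (Some y)" using ladder_image(1)[OF lm] by simp
  then show "x = y" using ladder_mapD(1)[OF lm] x y unfolding inj_on_def by blast
qed

text \<open>A neighbourhood of \<open>\<infinity>\<close> misses only finitely many limit ordinals, and \<open>\<phi>\<close> is injective on
  the isolated points, so only finitely many isolated points are mapped outside of it.\<close>

lemma finite_ladder_map_escape:
  assumes ls: "ladder_system s" and lm: "ladder_map \<phi>"
    and V: "openin (K_top s) V" "None \<in> V"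
  shows "finite {a. \<not> lim_ord a \<and> \<phi> (Some a) \<notin> V}"
proof -
  let ?E = "{a. \<not> lim_ord a \<and> \<phi> (Some a) \<notin> V}"
  have "compactin (ladder_top s) (- (Some -` V))" using V by (simp add: openin_K_top Kopen_def)
  then have fin: "finite {b \<in> - (Some -` V). lim_ord b}" by (rule finite_lim_ord_compactin[OF ls])
  have "\<phi> ` Some ` ?E \<subseteq> Some ` {b \<in> - (Some -` V). lim_ord b}"
  proof
    fix z assume "z \<in> \<phi> ` Some ` ?E"
    then obtain a where a: "\<not> lim_ord a" "\<phi> (Some a) \<notin> V" "z = \<phi> (Some a)" by blast
    then obtain b where "\<phi> (Some a) = Some b" "lim_ord b" using ladder_mapD(2)[OF lm] by blast
    then show "z \<in> Some ` {b \<in> - (Some -` V). lim_ord b}" using a by auto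
  qed
  then have "finite (\<phi> ` Some ` ?E)" by (rule finite_subset) (rule finite_imageI[OF fin])
  moreover have "inj_on \<phi> (Some ` ?E)" by (rule inj_on_subset[OF ladder_mapD(1)[OF lm]]) blast
  ultimately have "finite (Some ` ?E)" by (rule finite_imageD)
  then show ?thesis by (rule finite_imageD) simp
qed

lemma continuous_map_ladder_map:
  assumes ls: "ladder_system s" and lm: "ladder_map \<phi>"
  shows "continuous_map (K_top s) (K_top s) \<phi>"
  unfolding continuous_map_def
proof (intro conjI allI impI)
  show "\<phi> \<in> topspace (K_top s) \<rightarrow> topspace (K_top s)" by simp
  fix V assume V: "openin (K_top s) V"
  let ?W = "{x \<in> topspace (K_top s). \<phi> x \<in> V}"
  show "openin (K_top s) ?W"
  proof (cases "None \<in> V")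
    case False
    then have "None \<notin> ?W" using ladder_mapD(4)[OF lm] by simp
    moreover have "openin (ladder_top s) (Some -` ?W)"
    proof (rule openin_ladder_nonlim)
      fix x assume "x \<in> Some -` ?W"
      then show "\<not> lim_ord x" using False ladder_mapD(3)[OF lm, of x] by auto
    qed
    ultimately show ?thesis by (simp add: openin_K_top Kopen_def)
  next
    case True
    have "- (Some -` ?W) = {a. \<not> lim_ord a \<and> \<phi> (Some a) \<notin> V}"
      using True ladder_mapD(3)[OF lm] by auto
    then have fin: "finite (- (Some -` ?W))" using finite_ladder_map_escape[OF ls lm V True] by simp
    have "openin (ladder_top s) (Some -` ?W)"
      using openin_ladder_Diff_finite[OF openin_topspace[of "ladder_top s"] fin] by (simp add: Diff_Compl)
    moreover have "None \<in> ?W" using True ladder_mapD(4)[OF lm] by simp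
    ultimately show ?thesis
      using fin by (simp add: openin_K_top Kopen_def closedin_ladder_finite finite_imp_compactin)
  qed
qed

section \<open>Facts about \<open>\<omega>\<^sub>1\<close>\<close>

lemma omega1_countable_bounded:
  assumes om: "is_omega1 TYPE('a::wellorder)" and A: "countable (A::'a set)"
  obtains z where "\<forall>a\<in>A. a < z"
proof -
  have "\<exists>z. \<forall>a\<in>A. a < z"
  proof (rule ccontr)
    assume "\<not> ?thesis"
    then have "UNIV \<subseteq> (\<Union>a\<in>A. insert a {y. y < a})" by (auto simp: not_less le_less)
    moreover have "countable (\<Union>a\<in>A. insert a {y. y < a})"
      using om A unfolding is_omega1_def by (intro countable_UN) auto
    ultimately show False using om countable_subset unfolding is_omega1_def by blast
  qed
  then show thesis using that by blast
qed

definition succ_ord :: "'a::wellorder \<Rightarrow> 'a" where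
  "succ_ord y = (LEAST z. y < z)"

lemma less_succ_ord:
  assumes om: "is_omega1 TYPE('a::wellorder)"
  shows "(y::'a) < succ_ord y"
proof -
  have "countable {y}" by simp
  then obtain z where "\<forall>a\<in>{y}. a < z" by (rule omega1_countable_bounded[OF om])
  then have "\<exists>z. y < z" by blast
  then show ?thesis unfolding succ_ord_def by (rule LeastI_ex)
qed

lemma not_lim_ord_succ_ord:
  assumes om: "is_omega1 TYPE('a::wellorder)"
  shows "\<not> lim_ord (succ_ord (y::'a))"
proof
  assume "lim_ord (succ_ord y)"
  then obtain u where "y < u" "u < succ_ord y"
    using less_succ_ord[OF om, of y] unfolding lim_ord_def by blast
  then show False unfolding succ_ord_def using not_less_Least by blast
qed

lemma lim_ord_above:
  assumes om: "is_omega1 TYPE('a::wellorder)"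
  obtains L where "lim_ord L" "(y::'a) < L"
proof -
  define z where "z n = (succ_ord ^^ n) y" for n
  have zlt: "z n < z (Suc n)" for n using less_succ_ord[OF om] by (simp add: z_def)
  have "countable (range z)" by simp
  then obtain w where "\<forall>a\<in>range z. a < w" by (rule omega1_countable_bounded[OF om])
  define L where "L = (LEAST x. \<forall>n. z n < x)"
  have zL: "\<forall>n. z n < L" unfolding L_def by (rule LeastI[of _ w]) (use \<open>\<forall>a\<in>range z. a < w\<close> in auto)
  have "lim_ord L" unfolding lim_ord_def
  proof (intro conjI allI impI)
    show "\<exists>y. y < L" using zL by blast
    fix v assume "v < L"
    then have "\<not> (\<forall>n. z n < v)" unfolding L_def using not_less_Least by blast
    then obtain n where "v \<le> z n" by (auto simp: not_less)
    then show "\<exists>u. v < u \<and> u < L" using zlt[of n] zL by (meson order.strict_trans1)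
  qed
  moreover have "y < L" using zL[rule_format, of 0] by (simp add: z_def)
  ultimately show thesis by (rule that)
qed

lemma uncountable_lim_ord:
  assumes om: "is_omega1 TYPE('a::wellorder)"
  shows "uncountable {x::'a. lim_ord x}"
proof
  assume "countable {x::'a. lim_ord x}"
  then obtain z where "\<forall>a\<in>{x::'a. lim_ord x}. a < z" by (rule omega1_countable_bounded[OF om])
  moreover obtain L where "lim_ord L" "z < L" by (rule lim_ord_above[OF om])
  ultimately show False by (meson less_asym mem_Collect_eq)
qed

lemma uncountable_not_lim_ord:
  assumes om: "is_omega1 TYPE('a::wellorder)"
  shows "uncountable {x::'a. \<not> lim_ord x}"
proof
  assume "countable {x::'a. \<not> lim_ord x}"
  then obtain z where "\<forall>a\<in>{x::'a. \<not> lim_ord x}. a < z" by (rule omega1_countable_bounded[OF om])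
  then show False using not_lim_ord_succ_ord[OF om, of z] less_succ_ord[OF om, of z] by (meson less_asym mem_Collect_eq)
qed

unbundle cardinal_syntax

text \<open>There are as many limit ordinals as ordinals below \<open>\<omega>\<^sub>1\<close>, since every countable initial
  segment lies below some limit ordinal.\<close>

lemma ladder_map_exists:
  assumes om: "is_omega1 TYPE('a::wellorder)"
  shows "\<exists>\<phi> :: 'a option \<Rightarrow> 'a option. ladder_map \<phi>"
proof -
  let ?L = "{x::'a. lim_ord x}" and ?N = "{x::'a. \<not> lim_ord x}"
  have infL: "infinite ?L" using uncountable_lim_ord[OF om] countable_finite by blast
  have "|{y. y \<le> i}| \<le>o |?L|" for i :: 'a
  proof -
    have "{y. y \<le> i} = insert i {y. y < i}" by (auto simp: le_less)
    then have "countable {y. y \<le> i}" using om unfolding is_omega1_def by simp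
    then obtain f :: "_ \<Rightarrow> nat" where "inj_on f {y. y \<le> i}" by (auto simp: countable_def)
    then have "|{y. y \<le> i}| \<le>o |UNIV :: nat set|" using card_of_ordLeq by blast
    moreover have "|UNIV :: nat set| \<le>o |?L|" using infL infinite_iff_card_of_nat by blast
    ultimately show ?thesis using ordLeq_transitive by blast
  qed
  then have "|\<Union>a\<in>?L. {y. y \<le> a}| \<le>o |?L|"
    by (intro card_of_UNION_ordLeq_infinite[OF infL card_of_mono1]) auto
  moreover have "?N \<subseteq> (\<Union>a\<in>?L. {y. y \<le> a})"
  proof
    fix y :: 'a
    obtain L where "lim_ord L" "y < L" by (rule lim_ord_above[OF om])
    then show "y \<in> (\<Union>a\<in>?L. {y. y \<le> a})" by (auto intro: less_imp_le)
  qed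
  ultimately have "|?N| \<le>o |?L|" using card_of_mono1 ordLeq_transitive by blast
  then obtain j where j: "inj_on j ?N" "j ` ?N \<subseteq> ?L" using card_of_ordLeq[of ?N ?L] by blast
  let ?\<phi> = "\<lambda>z. case z of None \<Rightarrow> None | Some x \<Rightarrow> if lim_ord x then None else Some (j x)"
  have "ladder_map ?\<phi>"
    using j unfolding ladder_map_def by (auto simp: inj_on_def)
  then show ?thesis by blast
qed

lemma uncountable_near_dense_point:
  fixes \<delta> :: "'x \<Rightarrow> 'd \<Rightarrow> real"
  assumes A: "uncountable A" and D: "countable D" and near: "\<forall>a\<in>A. \<exists>d\<in>D. \<delta> (F a) d < e"
  obtains d where "d \<in> D" "uncountable {a\<in>A. \<delta> (F a) d < e}"
proof -
  have "\<forall>a\<in>A. \<exists>d. d \<in> D \<and> \<delta> (F a) d < e" using near by blast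
  from bchoice[OF this] obtain sel where sel: "\<forall>a\<in>A. sel a \<in> D \<and> \<delta> (F a) (sel a) < e" by blast
  have "\<exists>d\<in>D. uncountable {a\<in>A. sel a = d}"
  proof (rule ccontr)
    assume "\<not> ?thesis"
    then have "countable (\<Union>d\<in>D. {a\<in>A. sel a = d})" using D by (intro countable_UN) auto
    moreover have "A \<subseteq> (\<Union>d\<in>D. {a\<in>A. sel a = d})" using sel by blast
    ultimately show False using A countable_subset by blast
  qed
  then obtain d where "d \<in> D" "uncountable {a\<in>A. sel a = d}" by blast
  moreover have "{a\<in>A. sel a = d} \<subseteq> {a\<in>A. \<delta> (F a) d < e}" using sel by auto
  ultimately show thesis using that countable_subset by blast
qed

lemma uncountable_obtain_pair:
  assumes "uncountable S" "\<And>a. countable (C a)"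
  obtains a b where "a \<in> S" "b \<in> S" "b \<noteq> a" "b \<notin> C a"
proof -
  obtain a where a: "a \<in> S" using assms(1) countable_empty by (metis equals0I)
  have "countable (insert a (C a))" using assms(2) by simp
  then have "S - insert a (C a) \<noteq> {}" using assms(1) countable_subset[of S "insert a (C a)"] by auto
  then show thesis using a that by blast
qed

text \<open>A bounded additive set function has only finitely many atoms of size above \<open>e\<close>: \<open>N\<close> of them
  have total mass at least \<open>N e\<close>, which is at most twice the bound.\<close>

lemma bounded_additive_finite_atoms:
  assumes ba: "bounded_additive X \<nu> K" and H: "Hausdorff_space X" and e: "0 < e"
  shows "finite {p \<in> topspace X. e < \<bar>\<nu> {p}\<bar>}"
proof (rule ccontr)
  let ?A = "{p \<in> topspace X. e < \<bar>\<nu> {p}\<bar>}"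
  assume "infinite ?A"
  then obtain F where F: "finite F" "card F = nat \<lceil>2 * K / e\<rceil> + 1" "F \<subseteq> ?A"
    using infinite_arbitrarily_large by blast
  have "(\<Sum>B\<in>(\<lambda>p. {p}) ` F. \<bar>\<nu> B\<bar>) \<le> 2 * K"
    using F(1,3) borel_sets_singleton[OF H]
    by (intro bounded_additive_sum_abs_le[OF ba]) (auto simp: disjoint_def)
  then have "(\<Sum>p\<in>F. \<bar>\<nu> {p}\<bar>) \<le> 2 * K" by (simp add: sum.reindex)
  moreover have "(\<Sum>p\<in>F. e) \<le> (\<Sum>p\<in>F. \<bar>\<nu> {p}\<bar>)"
    using F(3) by (intro sum_mono) auto
  moreover have "2 * K < card F * e"
  proof -
    have "2 * K / e \<le> real (nat \<lceil>2 * K / e\<rceil>)" by linarith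
    then have "2 * K \<le> real (nat \<lceil>2 * K / e\<rceil>) * e" using e by (simp add: divide_le_eq)
    then show ?thesis using F(2) e by (simp add: algebra_simps)
  qed
  ultimately show False by simp
qed

theorem not_cond_b:
  fixes s :: "'a::wellorder \<Rightarrow> nat \<Rightarrow> 'a"
  assumes om: "is_omega1 TYPE('a)" and ls: "ladder_system s" and lm: "ladder_map \<phi>"
    and g: "bborel (K_top s) g"
  shows "\<not> cond_b (K_top s) (\<lambda>f. f \<circ> \<phi>) g"
proof
  let ?X = "K_top s" and ?T = "\<lambda>f. f \<circ> \<phi>"
  let ?R = "Aop ?X ?T g ` Mreg ?X" and ?x = "\<lambda>a. Aop ?X ?T g (dirac_sm ?X (Some a))"
  have X: "compact_space ?X" "Hausdorff_space ?X" by (rule compact_K_top, rule Hausdorff_K_top[OF ls])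
  have c: "continuous_map ?X ?X \<phi>" by (rule continuous_map_ladder_map[OF ls lm])
  obtain Bg where Bg: "0 \<le> Bg" "\<And>x. \<bar>g x\<bar> \<le> Bg" using bborel_bound[OF g] by auto
  assume "cond_b ?X ?T g"
  then obtain D where D: "countable D" "D \<subseteq> ?R" "\<forall>x\<in>?R. \<forall>e>0. \<exists>d\<in>D. tv_norm ?X (\<lambda>A. x A - d A) < e"
    unfolding cond_b_def Let_def by blast
  have "?x a \<in> ?R" for a using dirac_in_Mreg[OF X(2), of "Some a"] by simp
  then have "\<exists>d\<in>D. tv_norm ?X (\<lambda>A. ?x a A - d A) < 1/2" for a using D(3) by (meson half_gt_zero zero_less_one)
  then have "\<forall>a\<in>{a. \<not> lim_ord a}. \<exists>d\<in>D. tv_norm ?X (\<lambda>A. ?x a A - d A) < 1/2" by blast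
  then obtain d where d: "d \<in> D"
    and S: "uncountable {a\<in>{a. \<not> lim_ord a}. tv_norm ?X (\<lambda>A. ?x a A - d A) < 1/2}"
    by (rule uncountable_near_dense_point[OF uncountable_not_lim_ord[OF om] D(1)])
  let ?S = "{a\<in>{a. \<not> lim_ord a}. tv_norm ?X (\<lambda>A. ?x a A - d A) < 1/2}"
  obtain \<mu> where \<mu>: "\<mu> \<in> Mreg ?X" "d = Aop ?X ?T g \<mu>" using D(2) d by blast
  have bd: "bounded_additive ?X d (tv_norm ?X \<mu> + Bg * tv_norm ?X \<mu>)"
    unfolding \<mu>(2) by (rule bounded_additive_Aop[OF X c \<mu>(1) g Bg(2,1)])
  have large: "1/2 < \<bar>d {\<phi> (Some a)}\<bar>" if a: "a \<in> ?S" for a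
    using a ladder_mapD(2)[OF lm, of a] by (intro atom_near_Aop_dirac[OF X c _ _ g bd]) force+
  have "(\<lambda>a. \<phi> (Some a)) ` ?S \<subseteq> {p \<in> topspace ?X. 1/2 < \<bar>d {p}\<bar>}"
    using large by auto
  then have "finite ((\<lambda>a. \<phi> (Some a)) ` ?S)"
    by (rule finite_subset) (rule bounded_additive_finite_atoms[OF bd X(2)], simp)
  moreover have "inj_on (\<lambda>a. \<phi> (Some a)) ?S"
    using ladder_mapD(1)[OF lm] by (auto simp: inj_on_def)
  ultimately have "finite ?S" by (rule finite_imageD)
  then show False using S countable_finite by blast
qed

context
  fixes s :: "'a::wellorder \<Rightarrow> nat \<Rightarrow> 'a" and \<phi> :: "'a option \<Rightarrow> 'a option" and g :: "'a option \<Rightarrow> real"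
  assumes ls: "ladder_system s" and c: "continuous_map (K_top s) (K_top s) \<phi>"
    and g: "bborel (K_top s) g"
begin

lemma bidual_elt_dirac:
  assumes f: "f \<in> CK (K_top s)"
  shows "bidual_elt (K_top s) (\<lambda>f. f \<circ> \<phi>) g f (dirac_sm (K_top s) a) = f (\<phi> a) + g a * f a"
proof -
  have X: "compact_space (K_top s)" "Hausdorff_space (K_top s)"
    by (rule compact_K_top, rule Hausdorff_K_top[OF ls])
  obtain B where B: "\<forall>x\<in>topspace (K_top s). \<bar>f x\<bar> \<le> B" using CK_bound[OF X(1) f] by blast
  have "f \<in> borel_measurable (borel_measure (K_top s))"
    using f continuous_map_borel_measurable by (simp add: CK_def)
  then have "sint (K_top s) (\<lambda>A. dirac_sm (K_top s) (\<phi> a) A + g a * dirac_sm (K_top s) a A) f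
      = f (\<phi> a) + g a * f a"
    using B by (intro sint_dirac_add) auto
  moreover have "Aop (K_top s) (\<lambda>f. f \<circ> \<phi>) g (dirac_sm (K_top s) a) =
      (\<lambda>A. dirac_sm (K_top s) (\<phi> a) A + g a * dirac_sm (K_top s) a A)"
    by (rule Aop_dirac[OF X c _ g]) simp
  ultimately show ?thesis
    unfolding bidual_elt_def using dirac_in_Mreg[OF X(2)] by simp
qed

lemma bdd_above_bidual_dist:
  assumes f1: "f1 \<in> CK (K_top s)" and f2: "f2 \<in> CK (K_top s)"
  shows "bdd_above {\<bar>bidual_elt (K_top s) (\<lambda>f. f \<circ> \<phi>) g f1 \<mu> - bidual_elt (K_top s) (\<lambda>f. f \<circ> \<phi>) g f2 \<mu>\<bar> |
      \<mu>. \<mu> \<in> Mreg (K_top s) \<and> tv_norm (K_top s) \<mu> \<le> 1}"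
proof -
  let ?X = "K_top s" and ?A = "Aop (K_top s) (\<lambda>f. f \<circ> \<phi>) g"
  have X: "compact_space ?X" "Hausdorff_space ?X" by (rule compact_K_top, rule Hausdorff_K_top[OF ls])
  obtain Bg where Bg: "0 \<le> Bg" "\<And>x. \<bar>g x\<bar> \<le> Bg" using bborel_bound[OF g] by auto
  obtain B1 B2 where B: "B1 \<ge> 0" "\<forall>x. \<bar>f1 x\<bar> \<le> B1" "B2 \<ge> 0" "\<forall>x. \<bar>f2 x\<bar> \<le> B2"
    using CK_bound[OF X(1) f1] CK_bound[OF X(1) f2] by auto
  have "\<bar>bidual_elt ?X (\<lambda>f. f \<circ> \<phi>) g f1 \<mu> - bidual_elt ?X (\<lambda>f. f \<circ> \<phi>) g f2 \<mu>\<bar>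
      \<le> B1 * (3 * (1 + Bg)) + B2 * (3 * (1 + Bg))"
    if m: "\<mu> \<in> Mreg ?X" "tv_norm ?X \<mu> \<le> 1" for \<mu>
  proof -
    have "0 \<le> tv_norm ?X \<mu>" using m(1) by (simp add: Mreg_def tv_norm_nonneg)
    then have "tv_norm ?X \<mu> + Bg * tv_norm ?X \<mu> \<le> 1 + Bg"
      using m(2) Bg(1) by (simp add: add_mono mult_left_le)
    then have ba: "bounded_additive ?X (?A \<mu>) (1 + Bg)"
      using bounded_additive_Aop[OF X c m(1) g Bg(2,1)] bounded_additive_mono by blast
    have "\<bar>sint ?X (?A \<mu>) f1\<bar> \<le> B1 * (3 * (1 + Bg))" "\<bar>sint ?X (?A \<mu>) f2\<bar> \<le> B2 * (3 * (1 + Bg))"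
      using B by (intro sint_bound_bounded_additive[OF ba]; simp)+
    then show ?thesis using m(1) unfolding bidual_elt_def by simp
  qed
  then show ?thesis unfolding bdd_above_def by blast
qed

lemma bidual_dist_ge_dirac:
  assumes f1: "f1 \<in> CK (K_top s)" and f2: "f2 \<in> CK (K_top s)"
  shows "\<bar>(f1 (\<phi> a) + g a * f1 a) - (f2 (\<phi> a) + g a * f2 a)\<bar> \<le>
    bidual_dist (K_top s) (bidual_elt (K_top s) (\<lambda>f. f \<circ> \<phi>) g f1) (bidual_elt (K_top s) (\<lambda>f. f \<circ> \<phi>) g f2)"
  unfolding bidual_dist_def
  using dirac_in_Mreg[OF Hausdorff_K_top[OF ls], of a] tv_norm_dirac[of a "K_top s"]
    bidual_elt_dirac[OF f1, of a] bidual_elt_dirac[OF f2, of a]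
  by (intro cSup_upper[OF _ bdd_above_bidual_dist[OF f1 f2]]) force

end

text \<open>For an isolated point \<open>a\<close> let \<open>f\<^sub>a\<close> be the indicator of the clopen set
  \<open>({\<phi> a} \<union> s\<^sub>\<phi>\<^sub>a) - {a}\<close>. Evaluating at \<open>\<delta>\<^sub>b\<close> gives \<open>f\<^sub>a (\<phi> b) + g b f\<^sub>a b\<close>, which is \<open>1\<close> for \<open>a = b\<close>
  but \<open>0\<close> for every \<open>b \<noteq> a\<close> outside the countable set \<open>{\<phi> a} \<union> s\<^sub>\<phi>\<^sub>a\<close>, as \<open>\<phi>\<close> is injective.
  So no point is within \<open>1/2\<close> of uncountably many \<open>f\<^sub>a\<close>.\<close>

theorem not_cond_c:
  fixes s :: "'a::wellorder \<Rightarrow> nat \<Rightarrow> 'a"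
  assumes om: "is_omega1 TYPE('a)" and ls: "ladder_system s" and lm: "ladder_map \<phi>"
    and g: "bborel (K_top s) g"
  shows "\<not> cond_c (K_top s) (\<lambda>f. f \<circ> \<phi>) g"
proof
  let ?X = "K_top s" and ?T = "\<lambda>f. f \<circ> \<phi>"
  let ?R = "bidual_elt ?X ?T g ` CK ?X"
  have c: "continuous_map ?X ?X \<phi>" by (rule continuous_map_ladder_map[OF ls lm])
  let ?lam = "ladder_image \<phi>"
  define f :: "'a \<Rightarrow> 'a option \<Rightarrow> real"
    where "f a = indicator (Some ` (ladder_nbhd s (?lam a) - {a}))" for a
  have f: "f a \<in> CK ?X" if "\<not> lim_ord a" for a
    unfolding f_def using indicator_ladder_nbhd_in_CK[OF ls that] .
  assume "cond_c ?X ?T g"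
  then obtain D where D: "countable D" "D \<subseteq> ?R" "\<forall>x\<in>?R. \<forall>e>0. \<exists>d\<in>D. bidual_dist ?X x d < e"
    unfolding cond_c_def Let_def by blast
  have "\<exists>d\<in>D. bidual_dist ?X (bidual_elt ?X ?T g (f a)) d < 1/2" if "\<not> lim_ord a" for a
    using D(3) f[OF that] by (meson half_gt_zero image_eqI zero_less_one)
  then have "\<forall>a\<in>{a. \<not> lim_ord a}. \<exists>d\<in>D. bidual_dist ?X (bidual_elt ?X ?T g (f a)) d < 1/2" by blast
  then obtain d where d: "d \<in> D"
    and S: "uncountable {a\<in>{a. \<not> lim_ord a}. bidual_dist ?X (bidual_elt ?X ?T g (f a)) d < 1/2}"
    by (rule uncountable_near_dense_point[OF uncountable_not_lim_ord[OF om] D(1)])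
  let ?S = "{a\<in>{a. \<not> lim_ord a}. bidual_dist ?X (bidual_elt ?X ?T g (f a)) d < 1/2}"
  obtain a0 b where a0: "a0 \<in> ?S" and b: "b \<in> ?S" "b \<noteq> a0" "b \<notin> ladder_nbhd s (?lam a0)"
    by (rule uncountable_obtain_pair[OF S countable_ladder_nbhd])
  obtain h where h: "h \<in> CK ?X" "d = bidual_elt ?X ?T g h" using D(2) d by blast
  have "?lam b \<noteq> ?lam a0" using inj_on_ladder_image[OF lm] a0 b(1,2) unfolding inj_on_def by blast
  then have "?lam b \<notin> ladder_nbhd s (?lam a0)"
    using lim_ord_in_ladder_nbhd[OF ls _ ladder_image(2)[OF lm]] b(1) by blast
  then have "f a0 (\<phi> (Some b)) + g (Some b) * f a0 (Some b) = 0"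
    using b(1,3) by (simp add: ladder_image(1)[OF lm] f_def indicator_def inj_image_mem_iff)
  moreover have "?lam b \<noteq> b" using ladder_image(2)[OF lm, of b] b(1) by auto
  then have "f b (\<phi> (Some b)) + g (Some b) * f b (Some b) = 1"
    using b(1) ladder_nbhd_self by (simp add: ladder_image(1)[OF lm] f_def indicator_def inj_image_mem_iff)
  moreover have "\<bar>(f a0 (\<phi> (Some b)) + g (Some b) * f a0 (Some b)) - (h (\<phi> (Some b)) + g (Some b) * h (Some b))\<bar> < 1/2"
    using bidual_dist_ge_dirac[OF ls c g f h(1), of a0 "Some b"] a0 h(2) by auto
  moreover have "\<bar>(f b (\<phi> (Some b)) + g (Some b) * f b (Some b)) - (h (\<phi> (Some b)) + g (Some b) * h (Some b))\<bar> < 1/2"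
    using bidual_dist_ge_dirac[OF ls c g f h(1), of b "Some b"] b(1) h(2) by auto
  ultimately show False by linarith
qed

lemma bounded_op_composition:
  assumes C: "compact_space X" and c: "continuous_map X X \<phi>"
  shows "bounded_op X (\<lambda>f. f \<circ> \<phi>)"
  unfolding bounded_op_def
proof (intro conjI ballI allI exI[of _ 1])
  fix f assume f: "f \<in> CK X"
  then show "f \<circ> \<phi> \<in> CK X" using continuous_map_compose[OF c] by (simp add: CK_def)
  show "sup_norm X (f \<circ> \<phi>) \<le> 1 * sup_norm X f"
  proof (cases "topspace X = {}")
    case False
    obtain B where "\<forall>x\<in>topspace X. \<bar>f x\<bar> \<le> B" using CK_bound[OF C f] by blast
    then have bdd: "bdd_above ((\<lambda>x. \<bar>f x\<bar>) ` topspace X)" by (auto intro!: bdd_aboveI2)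
    have "\<bar>f (\<phi> x)\<bar> \<le> Sup ((\<lambda>x. \<bar>f x\<bar>) ` topspace X)" if "x \<in> topspace X" for x
      using c that by (intro cSup_upper[OF _ bdd]) (auto simp: continuous_map_def)
    then show ?thesis
      using False unfolding sup_norm_def by (auto intro!: cSup_least)
  qed (simp add: sup_norm_def)
qed simp

theorem theorem6:
  fixes s :: "'a::wellorder \<Rightarrow> nat \<Rightarrow> 'a"
  assumes "is_omega1 TYPE('a)"
    and "ladder_system s"
  shows "(\<forall>\<phi>. ladder_map \<phi> \<longrightarrow>
            \<not> (\<exists>g. bborel (K_top s) g \<and> cond_b (K_top s) (\<lambda>f. f \<circ> \<phi>) g) \<and>
            \<not> (\<exists>g. bborel (K_top s) g \<and> cond_c (K_top s) (\<lambda>f. f \<circ> \<phi>) g))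
      \<and> (\<exists>T. bounded_op (K_top s) T \<and>
            \<not> (\<exists>g. bborel (K_top s) g \<and> cond_b (K_top s) T g) \<and>
            \<not> (\<exists>g. bborel (K_top s) g \<and> cond_c (K_top s) T g))"
proof -
  have neither: "\<not> (\<exists>g. bborel (K_top s) g \<and> cond_b (K_top s) (\<lambda>f. f \<circ> \<phi>) g) \<and>
      \<not> (\<exists>g. bborel (K_top s) g \<and> cond_c (K_top s) (\<lambda>f. f \<circ> \<phi>) g)" if "ladder_map \<phi>" for \<phi>
    using not_cond_b[OF assms that] not_cond_c[OF assms that] by blast
  obtain \<phi> :: "'a option \<Rightarrow> 'a option" where "ladder_map \<phi>" using ladder_map_exists[OF assms(1)] by blast
  moreover have "bounded_op (K_top s) (\<lambda>f. f \<circ> \<phi>)"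
    by (rule bounded_op_composition[OF compact_K_top continuous_map_ladder_map[OF assms(2) \<open>ladder_map \<phi>\<close>]])
  ultimately show ?thesis using neither by blast
qed

end
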